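(* Let $V$ be finite, $n\ge1$, $G$ a multigraph on $V$ (self-loops allowed), and define $p_G$ by the routing formula below. Then (a) $p_G$ equals the Hermite-sum expression $$\sum_{\sigma:E(G)\to[n]}\ \prod_{u\in V,\, i\in[n]} h_{c_{u,i}(\sigma)}(d_{u,i}),$$ where $c_{u,i}(\sigma)$ is the number of half-edges at $u$ whose edge $e$ satisfies $\sigma(e)=i$ (so a self-loop at $u$ labeled $i$ contributes $2$), and $h_k$ is the monic (probabilists') Hermite polynomial of degree $k$; (b) $p_G$ is invariant under replacing $(d_u)_{u\in V}$ by $(Td_u)_{u\in V}$ for any orthogonal $n\times n$ matrix $T$; (c) $p_G$ has total degree $2|E(G)|$ in the variables $d_{u,i}$ and $p_G-m_G$ has strictly lower degree; and if $d_u\sim\mathcal N(0,\mathrm{Id}_n)$ are independent, then $\mathbb{E}[p_Gp_H]=0$ for any multigraphs $G,H$ on $V$ with $|E(G)|\ne|E(H)|$.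
   Context: A multigraph on $V$ is a finite multiset of edges $\{u,w\}$ with $u,w\in V$, self-loops allowed. For such $K$, $m_K=\prod_{\{u,w\}\in E(K)}\langle d_u,d_w\rangle$ with multiplicity (self-loop at $u$ gives $\langle d_u,d_u\rangle$), where $d_u\in\mathbb{R}^n$ and $d_{u,i}$ is its $i$-th coordinate. Each edge has two half-edges, one at each endpoint (both at $u$ for a loop at $u$). A matching collection $M=(M_v)_{v\in V}$ consists of a partial matching $M_v$ of the half-edges at $v$ for each $v$; $\mathcal M(G)$ is the set of all of them and $|M|=\sum_v|M_v|$ is the total number of matched pairs. Let $\Gamma_M$ be the multigraph on the set of half-edges with an edge joining the two half-edges of each edge of $G$ and an edge joining each $M$-matched pair; its components are paths and cycles. $\mathrm{cycles}(M)$ is the number of cycle components, and $\mathrm{route}(M)$ is the multigraph on $V$ having one edge $\{u,w\}$ for each path component of $\Gamma_M$ whose two end half-edges lie at $u$ and at $w$. The (Gaussian) polynomial is $$p_G=\sum_{M\in\mathcal M(G)}(-1)^{|M|}\,n^{\mathrm{cycles}(M)}\,m_{\mathrm{route}(M)}.$$ *)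

theory Defs
  imports "HOL-Probability.Probability" "HOL-Library.Poly_Mapping"
begin

(* Multivariate real polynomials in the variables d_{u,i} (u :: 'v, i :: 'n):
   a polynomial maps each monomial (exponent vector) to its coefficient. *)
type_synonym ('v,'n) mpoly = "(('v \<times> 'n) \<Rightarrow>\<^sub>0 nat) \<Rightarrow>\<^sub>0 real"

definition Var :: "'v \<Rightarrow> 'n \<Rightarrow> ('v,'n) mpoly" where
  "Var u i = Poly_Mapping.single (Poly_Mapping.single (u,i) 1) 1"

definition mdeg :: "('a \<Rightarrow>\<^sub>0 nat) \<Rightarrow> nat" where
  "mdeg m = (\<Sum>x\<in>Poly_Mapping.keys m. Poly_Mapping.lookup m x)"

definition tdeg :: "('v,'n) mpoly \<Rightarrow> nat" where
  "tdeg p = Max (insert 0 (mdeg ` Poly_Mapping.keys p))"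

definition eval_mp :: "('v,'n) mpoly \<Rightarrow> ('v \<Rightarrow> real^'n) \<Rightarrow> real" where
  "eval_mp p d = (\<Sum>m\<in>Poly_Mapping.keys p. Poly_Mapping.lookup p m * (\<Prod>x\<in>Poly_Mapping.keys m. (d (fst x) $ snd x) ^ Poly_Mapping.lookup m x))"

definition ip :: "'v \<Rightarrow> 'v \<Rightarrow> ('v,'n::finite) mpoly" where
  "ip u w = (\<Sum>i\<in>UNIV. Var u i * Var w i)"

(* A multigraph on V is given by a list of edges es; edge j (j < length es) is
   {fst (es!j), snd (es!j)}; (u,u) is a self-loop.  The multigraph is mset es
   (orientation and order are irrelevant). *)
type_synonym 'v mgraph = "('v \<times> 'v) list"

(* half-edges: (j,False) sits at fst (es!j), (j,True) at snd (es!j) *)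
definition halfedges :: "'v mgraph \<Rightarrow> (nat \<times> bool) set" where
  "halfedges es = {..<length es} \<times> UNIV"

definition hv :: "'v mgraph \<Rightarrow> nat \<times> bool \<Rightarrow> 'v" where
  "hv es h = (if snd h then snd (es ! fst h) else fst (es ! fst h))"

definition mono_m :: "'v mgraph \<Rightarrow> ('v,'n::finite) mpoly" where
  "mono_m es = (\<Prod>j<length es. ip (fst (es!j)) (snd (es!j)))"

(* A matching collection M = (M_v)_v is represented by the set of all matched
   pairs (union of the M_v): a set of pairwise disjoint 2-sets of half-edges,
   each consisting of two distinct half-edges at the same vertex. *)
definition matching_colls :: "'v mgraph \<Rightarrow> (nat \<times> bool) set set set" where
  "matching_colls es = {M. (\<forall>p\<in>M. \<exists>h h'. p = {h,h'} \<and> h \<noteq> h' \<and>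
        h \<in> halfedges es \<and> h' \<in> halfedges es \<and> hv es h = hv es h') \<and>
      (\<forall>p\<in>M. \<forall>q\<in>M. p \<noteq> q \<longrightarrow> p \<inter> q = {})}"

definition matched :: "(nat \<times> bool) set set \<Rightarrow> nat \<times> bool \<Rightarrow> bool" where
  "matched M h = (\<exists>p\<in>M. h \<in> p)"

definition gamma_adj :: "'v mgraph \<Rightarrow> (nat \<times> bool) set set \<Rightarrow> ((nat \<times> bool) \<times> (nat \<times> bool)) set" where
  "gamma_adj es M = {(h,h'). h \<in> halfedges es \<and> h' \<in> halfedges es \<and> h \<noteq> h' \<and>
      (fst h = fst h' \<or> {h,h'} \<in> M)}"

definition gamma_comps :: "'v mgraph \<Rightarrow> (nat \<times> bool) set set \<Rightarrow> (nat \<times> bool) set set" where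
  "gamma_comps es M = halfedges es // ((gamma_adj es M)\<^sup>*)"

(* Every vertex of Gamma_M has degree 1 (unmatched) or 2 (matched); a component is
   a cycle iff all its vertices have degree 2, otherwise it is a path whose two
   ends are exactly its unmatched half-edges. *)
definition cycle_comps :: "'v mgraph \<Rightarrow> (nat \<times> bool) set set \<Rightarrow> (nat \<times> bool) set set" where
  "cycle_comps es M = {C \<in> gamma_comps es M. \<forall>h\<in>C. matched M h}"

definition path_comps :: "'v mgraph \<Rightarrow> (nat \<times> bool) set set \<Rightarrow> (nat \<times> bool) set set" where
  "path_comps es M = {C \<in> gamma_comps es M. \<exists>h\<in>C. \<not> matched M h}"

definition path_ends :: "(nat \<times> bool) set set \<Rightarrow> (nat \<times> bool) set \<Rightarrow> (nat \<times> bool) set" where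
  "path_ends M C = {h \<in> C. \<not> matched M h}"

(* m_{route(M)}: one factor <d_u,d_w> per path component with end half-edges at u and w
   (the two ends h1 \<noteq> h2 give  sum_i d_{u,i} d_{w,i}) *)
definition m_route :: "'v mgraph \<Rightarrow> (nat \<times> bool) set set \<Rightarrow> ('v,'n::finite) mpoly" where
  "m_route es M = (\<Prod>C\<in>path_comps es M. \<Sum>i\<in>UNIV. \<Prod>h\<in>path_ends M C. Var (hv es h) i)"

definition pG :: "'v mgraph \<Rightarrow> ('v,'n::finite) mpoly" where
  "pG es = (\<Sum>M\<in>matching_colls es.
      (-1) ^ card M * of_nat (CARD('n)) ^ card (cycle_comps es M) * m_route es M)"

fun hermite :: "nat \<Rightarrow> 'a::comm_ring_1 \<Rightarrow> 'a" where
  "hermite 0 x = 1"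
| "hermite (Suc 0) x = x"
| "hermite (Suc (Suc k)) x = x * hermite (Suc k) x - of_nat (Suc k) * hermite k x"

definition cnt :: "'v mgraph \<Rightarrow> (nat \<Rightarrow> 'n) \<Rightarrow> 'v \<Rightarrow> 'n \<Rightarrow> nat" where
  "cnt es \<sigma> u i = card {h \<in> halfedges es. hv es h = u \<and> \<sigma> (fst h) = i}"

(* standard Gaussian on all coordinates d_{u,i}, i.e. d_u ~ N(0, Id_n) independent *)
definition gauss :: "(('v \<times> 'n) \<Rightarrow> real) measure" where
  "gauss = PiM UNIV (\<lambda>_. density lborel std_normal_density)"

definition to_pt :: "(('v \<times> 'n) \<Rightarrow> real) \<Rightarrow> ('v \<Rightarrow> real^'n)" where
  "to_pt x = (\<lambda>u. \<chi> i. x (u,i))"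

end

(*
  Expand each Hermite factor as a signed sum over partial matchings: h_c(x) is the sum, over
  the partial matchings N of a c-element set, of (-1)^|N| x^(c - 2|N|). Then the Hermite sum
  becomes a sum over labellings sigma of the edges and matching collections M with which sigma is
  compatible (matched half-edges carry equal labels), every unmatched half-edge contributing its
  variable. For fixed M the compatible labellings are exactly those constant on the components
  of Gamma_M; summing over them gives a factor n for each cycle and, for each path with ends at u
  and w, the inner product <d_u, d_w>.

  The empty matching contributes m_G, homogeneous of degree 2|E(G)|, and every other matching a
  polynomial of smaller degree, which gives (c). A path component has exactly two ends, so p_G is
  a polynomial in the inner products <d_u, d_w> and hence orthogonally invariant (b). Finally, by
  (a), p_G p_H is a sum of products over all coordinates of Hermite polynomials whose degrees add
  up to 2|E(G)| and 2|E(H)|; if these differ, some coordinate carries Hermite polynomials of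
  different degrees, and the Gaussian integral vanishes by their orthogonality.
*)

theory Submission
  imports Defs "HOL-Computational_Algebra.Polynomial"
begin

section \<open>Evaluation and degree of polynomials\<close>

definition monom_eval :: "(('v \<times> 'n) \<Rightarrow>\<^sub>0 nat) \<Rightarrow> ('v \<Rightarrow> real^'n) \<Rightarrow> real" where
  "monom_eval m d = (\<Prod>x\<in>Poly_Mapping.keys m. (d (fst x) $ snd x) ^ Poly_Mapping.lookup m x)"

lemma monom_eval_superset:
  assumes "finite S" "Poly_Mapping.keys m \<subseteq> S"
  shows "monom_eval m d = (\<Prod>x\<in>S. (d (fst x) $ snd x) ^ Poly_Mapping.lookup m x)"
  unfolding monom_eval_def
  by (rule prod.mono_neutral_left) (use assms in \<open>auto simp: in_keys_iff\<close>)

lemma monom_eval_add: "monom_eval (a + b) d = monom_eval a d * monom_eval b d"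
proof -
  let ?S = "Poly_Mapping.keys a \<union> Poly_Mapping.keys b"
  have fin: "finite ?S" by simp
  have "monom_eval (a + b) d = (\<Prod>x\<in>?S. (d (fst x) $ snd x) ^ Poly_Mapping.lookup (a + b) x)"
    by (rule monom_eval_superset[OF fin keys_add])
  also have "\<dots> = monom_eval a d * monom_eval b d"
    by (simp add: lookup_add power_add prod.distrib monom_eval_superset[OF fin])
  finally show ?thesis .
qed

lemma eval_mp_eq_sum_monom_eval:
  "eval_mp p d = (\<Sum>m\<in>Poly_Mapping.keys p. Poly_Mapping.lookup p m * monom_eval m d)"
  by (simp add: eval_mp_def monom_eval_def)

lemma eval_mp_add: "eval_mp (p + q) d = eval_mp p d + eval_mp q d"
  unfolding eval_mp_eq_sum_monom_eval
  by (rule setsum_keys_plus_distrib) (auto simp: algebra_simps)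

lemma eval_mp_0 [simp]: "eval_mp 0 d = 0"
  by (simp add: eval_mp_eq_sum_monom_eval)

lemma eval_mp_single: "eval_mp (Poly_Mapping.single m c) d = c * monom_eval m d"
  by (cases "c = 0") (simp_all add: eval_mp_eq_sum_monom_eval)

lemma poly_mapping_eq_sum_single:
  "p = (\<Sum>m\<in>Poly_Mapping.keys p. Poly_Mapping.single m (Poly_Mapping.lookup p m))"
  by (rule poly_mapping_eqI) (simp add: lookup_sum lookup_single when_def in_keys_iff)

lemma eval_mp_sum: "finite I \<Longrightarrow> eval_mp (\<Sum>i\<in>I. f i) d = (\<Sum>i\<in>I. eval_mp (f i) d)"
  by (induction I rule: finite_induct) (simp_all add: eval_mp_add)

lemma eval_mp_mult: "eval_mp (p * q) d = eval_mp p d * eval_mp q d"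
proof -
  have "p * q = (\<Sum>m\<in>Poly_Mapping.keys p. Poly_Mapping.single m (Poly_Mapping.lookup p m)) *
                (\<Sum>m\<in>Poly_Mapping.keys q. Poly_Mapping.single m (Poly_Mapping.lookup q m))"
    by (subst poly_mapping_eq_sum_single[of p], subst poly_mapping_eq_sum_single[of q]) (rule refl)
  also have "\<dots> = (\<Sum>m\<in>Poly_Mapping.keys p. \<Sum>m'\<in>Poly_Mapping.keys q.
        Poly_Mapping.single (m + m') (Poly_Mapping.lookup p m * Poly_Mapping.lookup q m'))"
    by (simp add: sum_distrib_left sum_distrib_right mult_single) (rule sum.swap)
  finally have "eval_mp (p * q) d = (\<Sum>m\<in>Poly_Mapping.keys p. \<Sum>m'\<in>Poly_Mapping.keys q.
        (Poly_Mapping.lookup p m * monom_eval m d) * (Poly_Mapping.lookup q m' * monom_eval m' d))"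
    by (simp add: eval_mp_sum eval_mp_single monom_eval_add algebra_simps)
  also have "\<dots> = eval_mp p d * eval_mp q d"
    by (simp add: eval_mp_eq_sum_monom_eval sum_product)
  finally show ?thesis .
qed

lemma eval_mp_1 [simp]: "eval_mp 1 d = 1"
  using eval_mp_single[of 0 1 d] by (simp add: monom_eval_def)

lemma eval_mp_uminus: "eval_mp (- p) d = - eval_mp p d"
  using eval_mp_add[of p "- p" d] by simp

lemma eval_mp_diff: "eval_mp (p - q) d = eval_mp p d - eval_mp q d"
  by (simp only: diff_conv_add_uminus eval_mp_add eval_mp_uminus)

lemma eval_mp_prod: "finite I \<Longrightarrow> eval_mp (\<Prod>i\<in>I. f i) d = (\<Prod>i\<in>I. eval_mp (f i) d)"
  by (induction I rule: finite_induct) (simp_all add: eval_mp_mult)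

lemma eval_mp_power: "eval_mp (p ^ k) d = eval_mp p d ^ k"
  by (induction k) (simp_all add: eval_mp_mult)

lemma eval_mp_of_nat [simp]: "eval_mp (of_nat k) d = of_nat k"
  by (induction k) (simp_all add: eval_mp_add)

lemma eval_mp_hermite: "eval_mp (hermite k p) d = hermite k (eval_mp p d)"
  by (induction k p rule: hermite.induct) (simp_all add: eval_mp_diff eval_mp_mult eval_mp_add)

lemma eval_mp_Var [simp]: "eval_mp (Var u i) d = d u $ i"
  by (simp add: Var_def eval_mp_single monom_eval_def)

lemma mdeg_superset:
  assumes "finite S" "Poly_Mapping.keys m \<subseteq> S"
  shows "mdeg m = (\<Sum>x\<in>S. Poly_Mapping.lookup m x)"
  unfolding mdeg_def
  by (rule sum.mono_neutral_left) (use assms in \<open>auto simp: in_keys_iff\<close>)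

lemma mdeg_add: "mdeg (a + b) = mdeg a + mdeg b"
proof -
  let ?S = "Poly_Mapping.keys a \<union> Poly_Mapping.keys b"
  have fin: "finite ?S" by simp
  have "mdeg (a + b) = (\<Sum>x\<in>?S. Poly_Mapping.lookup (a + b) x)"
    by (rule mdeg_superset[OF fin keys_add])
  also have "\<dots> = mdeg a + mdeg b"
    by (simp add: lookup_add sum.distrib mdeg_superset[OF fin])
  finally show ?thesis .
qed

lemma mdeg_0 [simp]: "mdeg 0 = 0"
  by (simp add: mdeg_def)

definition deg_le :: "('v,'n) mpoly \<Rightarrow> nat \<Rightarrow> bool" where
  "deg_le p k \<longleftrightarrow> (\<forall>m\<in>Poly_Mapping.keys p. mdeg m \<le> k)"

definition homogeneous :: "('v,'n) mpoly \<Rightarrow> nat \<Rightarrow> bool" where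
  "homogeneous p k \<longleftrightarrow> (\<forall>m\<in>Poly_Mapping.keys p. mdeg m = k)"

lemma deg_le_mono: "deg_le p k \<Longrightarrow> k \<le> k' \<Longrightarrow> deg_le p k'"
  by (auto simp: deg_le_def)

lemma deg_le_mult: "deg_le p k \<Longrightarrow> deg_le q l \<Longrightarrow> deg_le (p * q) (k + l)"
  using keys_mult[of p q] by (force simp: deg_le_def mdeg_add intro: add_mono)

lemma deg_le_sum: "(\<And>i. i \<in> I \<Longrightarrow> deg_le (f i) k) \<Longrightarrow> deg_le (\<Sum>i\<in>I. f i) k"
  using keys_sum[of f I] by (force simp: deg_le_def)

lemma deg_le_prod:
  "finite I \<Longrightarrow> (\<And>i. i \<in> I \<Longrightarrow> deg_le (f i) (k i)) \<Longrightarrow> deg_le (\<Prod>i\<in>I. f i) (\<Sum>i\<in>I. k i)"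
  by (induction I rule: finite_induct) (simp_all add: deg_le_mult, simp add: deg_le_def)

lemma deg_le_uminus: "deg_le p k \<Longrightarrow> deg_le (- p) k"
  by (simp add: deg_le_def)

lemma deg_le_of_nat: "deg_le (of_nat c) 0"
proof -
  have "Poly_Mapping.keys (of_nat c :: ('v,'n) mpoly) \<subseteq> {0}"
    by (metis keys_single single_of_nat empty_subsetI order_refl)
  then show ?thesis by (auto simp: deg_le_def)
qed

lemma deg_le_power: "deg_le p 0 \<Longrightarrow> deg_le (p ^ k) 0"
proof (induction k)
  case 0
  then show ?case using deg_le_of_nat[of 1] by simp
next
  case (Suc k)
  then show ?case using deg_le_mult[of p 0 "p ^ k" 0] by simp
qed

lemma deg_le_Var: "deg_le (Var u i) 1"
  by (simp add: deg_le_def Var_def mdeg_def)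

lemma homogeneous_mult: "homogeneous p k \<Longrightarrow> homogeneous q l \<Longrightarrow> homogeneous (p * q) (k + l)"
  using keys_mult[of p q] by (force simp: homogeneous_def mdeg_add)

lemma homogeneous_sum: "(\<And>i. i \<in> I \<Longrightarrow> homogeneous (f i) k) \<Longrightarrow> homogeneous (\<Sum>i\<in>I. f i) k"
  using keys_sum[of f I] by (force simp: homogeneous_def)

lemma homogeneous_prod:
  "finite I \<Longrightarrow> (\<And>i. i \<in> I \<Longrightarrow> homogeneous (f i) (k i)) \<Longrightarrow>
    homogeneous (\<Prod>i\<in>I. f i) (\<Sum>i\<in>I. k i)"
  by (induction I rule: finite_induct) (simp_all add: homogeneous_mult, simp add: homogeneous_def)

lemma homogeneous_Var: "homogeneous (Var u i) 1"
  by (simp add: homogeneous_def Var_def mdeg_def)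

section \<open>Hermite polynomials as matching sums\<close>

definition partial_matchings :: "'b set \<Rightarrow> 'b set set set" where
  "partial_matchings S = {N. (\<forall>p\<in>N. \<exists>a b. p = {a, b} \<and> a \<noteq> b \<and> a \<in> S \<and> b \<in> S) \<and>
      (\<forall>p\<in>N. \<forall>q\<in>N. p \<noteq> q \<longrightarrow> p \<inter> q = {})}"

definition matching_sum :: "'b set \<Rightarrow> 'a::comm_ring_1 \<Rightarrow> 'a" where
  "matching_sum S x = (\<Sum>N\<in>partial_matchings S. (-1) ^ card N * x ^ card (S - \<Union>N))"

lemma partial_matchingsI:
  assumes "\<And>p. p \<in> N \<Longrightarrow> \<exists>a b. p = {a, b} \<and> a \<noteq> b \<and> a \<in> S \<and> b \<in> S"
    and "\<And>p q. p \<in> N \<Longrightarrow> q \<in> N \<Longrightarrow> p \<noteq> q \<Longrightarrow> p \<inter> q = {}"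
  shows "N \<in> partial_matchings S"
  unfolding partial_matchings_def mem_Collect_eq
    by (intro conjI ballI impI) (fact assms(1), fact assms(2))

lemma partial_matchingsD:
  "N \<in> partial_matchings S \<Longrightarrow> p \<in> N \<Longrightarrow> \<exists>a b. p = {a, b} \<and> a \<noteq> b \<and> a \<in> S \<and> b \<in> S"
  unfolding partial_matchings_def by blast

lemma partial_matchings_disjoint:
  "N \<in> partial_matchings S \<Longrightarrow> p \<in> N \<Longrightarrow> q \<in> N \<Longrightarrow> p \<noteq> q \<Longrightarrow> p \<inter> q = {}"
  unfolding partial_matchings_def by blast

lemma partial_matchings_subset_Pow: "partial_matchings S \<subseteq> Pow (Pow S)"
proof
  fix N assume "N \<in> partial_matchings S"
  then have "\<forall>p\<in>N. \<exists>a b. p = {a, b} \<and> a \<noteq> b \<and> a \<in> S \<and> b \<in> S"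
    by (simp add: partial_matchings_def)
  then show "N \<in> Pow (Pow S)" by auto
qed

lemma finite_partial_matchings: "finite S \<Longrightarrow> finite (partial_matchings S)"
  by (rule finite_subset[OF partial_matchings_subset_Pow]) simp

lemma partial_matchings_empty: "partial_matchings {} = {{}}"
  unfolding partial_matchings_def by auto

lemma partial_matchings_mono:
  assumes "T \<subseteq> S"
  shows "partial_matchings T \<subseteq> partial_matchings S"
proof
  fix N assume N: "N \<in> partial_matchings T"
  show "N \<in> partial_matchings S"
  proof (rule partial_matchingsI)
    fix p assume "p \<in> N"
    then obtain a b where "p = {a, b}" "a \<noteq> b" "a \<in> T" "b \<in> T"
      using partial_matchingsD[OF N] by blast
    then show "\<exists>a b. p = {a, b} \<and> a \<noteq> b \<and> a \<in> S \<and> b \<in> S" using assms by blast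
  qed (rule partial_matchings_disjoint[OF N])
qed

lemma partial_matchings_avoiding:
  assumes "a \<in> S"
  shows "{N\<in>partial_matchings S. a \<notin> \<Union>N} = partial_matchings (S - {a})"
proof (intro equalityI subsetI)
  fix N assume N: "N \<in> {N\<in>partial_matchings S. a \<notin> \<Union>N}"
  show "N \<in> partial_matchings (S - {a})"
  proof (rule partial_matchingsI)
    fix p assume p: "p \<in> N"
    have NS: "N \<in> partial_matchings S" using N by simp
    obtain c d where "p = {c, d}" "c \<noteq> d" "c \<in> S" "d \<in> S"
      using partial_matchingsD[OF NS p] by blast
    moreover have "a \<notin> p" using N p by blast
    ultimately show "\<exists>c d. p = {c, d} \<and> c \<noteq> d \<and> c \<in> S - {a} \<and> d \<in> S - {a}" by blast
  next
    fix p q assume "p \<in> N" "q \<in> N" "p \<noteq> q"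
    moreover have "N \<in> partial_matchings S" using N by simp
    ultimately show "p \<inter> q = {}" using partial_matchings_disjoint by blast
  qed
next
  fix N assume N: "N \<in> partial_matchings (S - {a})"
  have "N \<in> partial_matchings S" using partial_matchings_mono[of "S - {a}" S] N by blast
  moreover have "a \<notin> \<Union>N" using N partial_matchings_subset_Pow by blast
  ultimately show "N \<in> {N\<in>partial_matchings S. a \<notin> \<Union>N}" by blast
qed

lemma partial_matchings_insert_pair:
  assumes N: "N \<in> partial_matchings (S - {a} - {b})" and ab: "a \<in> S" "b \<in> S" "a \<noteq> b"
  shows "insert {a, b} N \<in> partial_matchings S"
proof (rule partial_matchingsI)
  fix p assume p: "p \<in> insert {a, b} N"
  show "\<exists>c d. p = {c, d} \<and> c \<noteq> d \<and> c \<in> S \<and> d \<in> S"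
  proof (cases "p = {a, b}")
    case True
    then show ?thesis using ab by blast
  next
    case False
    then have "p \<in> N" using p by simp
    then obtain c d where "p = {c, d}" "c \<noteq> d" "c \<in> S - {a} - {b}" "d \<in> S - {a} - {b}"
      using partial_matchingsD[OF N, of p] by auto
    then show ?thesis by (intro exI[of _ c] exI[of _ d]) auto
  qed
next
  have sub: "\<Union>N \<subseteq> S - {a} - {b}" using N partial_matchings_subset_Pow by blast
  fix p q assume pq: "p \<in> insert {a, b} N" "q \<in> insert {a, b} N" "p \<noteq> q"
  show "p \<inter> q = {}"
  proof (cases "p = {a, b} \<or> q = {a, b}")
    case True
    then show ?thesis using pq sub by blast
  next
    case False
    then show ?thesis using pq partial_matchings_disjoint[OF N] by blast
  qed
qed

lemma partial_matchings_remove_pair: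
  assumes N: "N \<in> partial_matchings S" and p: "p \<in> N" "a \<in> p"
  obtains b where "b \<in> S - {a}" "p = {a, b}" "N - {p} \<in> partial_matchings (S - {a} - {b})"
proof -
  obtain b where b: "p = {a, b}" "b \<noteq> a" "b \<in> S"
    using partial_matchingsD[OF N p(1)] p(2) by auto
  have "N - {p} \<in> partial_matchings (S - {a} - {b})"
  proof (rule partial_matchingsI)
    fix q assume q: "q \<in> N - {p}"
    then have "q \<inter> p = {}" using partial_matchings_disjoint[OF N, of q p] p(1) by blast
    moreover obtain c d where "q = {c, d}" "c \<noteq> d" "c \<in> S" "d \<in> S"
      using partial_matchingsD[OF N, of q] q by blast
    ultimately show "\<exists>c d. q = {c, d} \<and> c \<noteq> d \<and> c \<in> S - {a} - {b} \<and> d \<in> S - {a} - {b}"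
      using b(1) by blast
  next
    fix q q' assume "q \<in> N - {p}" "q' \<in> N - {p}" "q \<noteq> q'"
    then show "q \<inter> q' = {}" using partial_matchings_disjoint[OF N] by blast
  qed
  then show thesis using that b by blast
qed

lemma partial_matchings_covering:
  assumes "a \<in> S"
  shows "{N\<in>partial_matchings S. a \<in> \<Union>N} =
    (\<Union>b\<in>S - {a}. insert {a, b} ` partial_matchings (S - {a} - {b}))"
proof (intro equalityI subsetI)
  fix N assume "N \<in> {N\<in>partial_matchings S. a \<in> \<Union>N}"
  then obtain p where N: "N \<in> partial_matchings S" and p: "p \<in> N" "a \<in> p" by auto
  obtain b where "b \<in> S - {a}" "p = {a, b}" "N - {p} \<in> partial_matchings (S - {a} - {b})"
    using partial_matchings_remove_pair[OF N p] .
  moreover have "N = insert p (N - {p})" using p(1) by auto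
  ultimately show "N \<in> (\<Union>b\<in>S - {a}. insert {a, b} ` partial_matchings (S - {a} - {b}))"
    by blast
next
  fix N assume "N \<in> (\<Union>b\<in>S - {a}. insert {a, b} ` partial_matchings (S - {a} - {b}))"
  then obtain b N' where "b \<in> S - {a}" "N' \<in> partial_matchings (S - {a} - {b})" "N = insert {a, b} N'"
    by blast
  then show "N \<in> {N\<in>partial_matchings S. a \<in> \<Union>N}"
    using partial_matchings_insert_pair[of N' S a b] assms by auto
qed

lemma sum_partial_matchings_avoiding:
  assumes "finite S" "a \<in> S"
  shows "(\<Sum>N\<in>{N\<in>partial_matchings S. a \<notin> \<Union>N}. (-1) ^ card N * x ^ card (S - \<Union>N)) =
    x * matching_sum (S - {a}) x"
  unfolding partial_matchings_avoiding[OF assms(2)] matching_sum_def sum_distrib_left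
proof (rule sum.cong[OF refl])
  fix N assume "N \<in> partial_matchings (S - {a})"
  then have "S - \<Union>N = insert a (S - {a} - \<Union>N)"
    using partial_matchings_subset_Pow assms(2) by blast
  then show "(-1) ^ card N * x ^ card (S - \<Union>N) = x * ((-1) ^ card N * x ^ card (S - {a} - \<Union>N))"
    using assms(1) by (simp add: algebra_simps)
qed

lemma pair_notin_partial_matchings_Diff: "N \<in> partial_matchings (S - {a} - {b}) \<Longrightarrow> {a, c} \<notin> N"
  using partial_matchings_subset_Pow[of "S - {a} - {b}"] by blast

lemma sum_partial_matchings_covering:
  assumes "finite S" "a \<in> S"
  shows "(\<Sum>N\<in>{N\<in>partial_matchings S. a \<in> \<Union>N}. (-1) ^ card N * x ^ card (S - \<Union>N)) =
    - (\<Sum>b\<in>S - {a}. matching_sum (S - {a} - {b}) x)"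
proof -
  let ?f = "\<lambda>N. (-1) ^ card N * x ^ card (S - \<Union>N)"
  let ?P = "\<lambda>b. partial_matchings (S - {a} - {b})"
  note notin = pair_notin_partial_matchings_Diff[of _ S a]
  have inj: "inj_on (insert {a, b}) (?P b)" for b
    by (rule inj_onI) (metis notin insert_ident)
  have disj: "insert {a, b} ` ?P b \<inter> insert {a, c} ` ?P c = {}"
    if "b \<noteq> c" for b c
  proof (rule ccontr)
    assume "\<not> ?thesis"
    then obtain N N' where N': "N' \<in> ?P c" and eq: "insert {a, b} N = insert {a, c} N'" by blast
    have "{a, b} \<in> insert {a, c} N'" unfolding eq[symmetric] by simp
    then have "{a, b} = {a, c}" using notin[OF N'] by blast
    then show False using that by (metis doubleton_eq_iff)
  qed
  have term_insert: "?f (insert {a, b} N) = - ((-1) ^ card N * x ^ card (S - {a} - {b} - \<Union>N))"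
    if "b \<in> S - {a}" "N \<in> ?P b" for b N
  proof -
    have "finite N"
      using that assms(1) partial_matchings_subset_Pow[of "S - {a} - {b}"]
      by (meson PowD finite_Diff finite_Pow_iff finite_subset subsetD)
    then have "card (insert {a, b} N) = Suc (card N)" using notin[OF that(2)] by simp
    moreover have "S - \<Union>(insert {a, b} N) = S - {a} - {b} - \<Union>N" by auto
    ultimately show ?thesis by simp
  qed
  have "(\<Sum>N\<in>{N\<in>partial_matchings S. a \<in> \<Union>N}. ?f N) =
      (\<Sum>b\<in>S - {a}. \<Sum>N\<in>insert {a, b} ` ?P b. ?f N)"
    unfolding partial_matchings_covering[OF assms(2)]
  proof (rule sum.UNION_disjoint)
    show "finite (S - {a})" using assms(1) by simp
    show "\<forall>b\<in>S - {a}. finite (insert {a, b} ` ?P b)"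
      using assms(1) by (simp add: finite_partial_matchings)
    show "\<forall>b\<in>S - {a}. \<forall>c\<in>S - {a}. b \<noteq> c \<longrightarrow> insert {a, b} ` ?P b \<inter> insert {a, c} ` ?P c = {}"
      using disj by blast
  qed
  also have "\<dots> = (\<Sum>b\<in>S - {a}. - matching_sum (S - {a} - {b}) x)"
  proof (rule sum.cong[OF refl])
    fix b assume b: "b \<in> S - {a}"
    have "(\<Sum>N\<in>insert {a, b} ` ?P b. ?f N) = (\<Sum>N\<in>?P b. ?f (insert {a, b} N))"
      by (rule sum.reindex[OF inj, unfolded comp_def])
    also have "\<dots> = - matching_sum (S - {a} - {b}) x"
      unfolding matching_sum_def sum_negf[symmetric]
        by (rule sum.cong[OF refl]) (rule term_insert[OF b])
    finally show "(\<Sum>N\<in>insert {a, b} ` ?P b. ?f N) = - matching_sum (S - {a} - {b}) x" .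
  qed
  finally show ?thesis by (simp add: sum_negf)
qed

lemma matching_sum_rec:
  assumes "finite S" "a \<in> S"
  shows "matching_sum S x = x * matching_sum (S - {a}) x - (\<Sum>b\<in>S - {a}. matching_sum (S - {a} - {b}) x)"
proof -
  let ?f = "\<lambda>N. (-1) ^ card N * x ^ card (S - \<Union>N)"
  have fin: "finite (partial_matchings S)" using assms(1) by (rule finite_partial_matchings)
  have "(\<Sum>N\<in>{N\<in>partial_matchings S. a \<notin> \<Union>N}. ?f N) + (\<Sum>N\<in>{N\<in>partial_matchings S. a \<in> \<Union>N}. ?f N) =
      (\<Sum>N\<in>{N\<in>partial_matchings S. a \<notin> \<Union>N} \<union> {N\<in>partial_matchings S. a \<in> \<Union>N}. ?f N)"
    by (rule sum.union_disjoint[symmetric]) (use fin in auto)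
  also have "{N\<in>partial_matchings S. a \<notin> \<Union>N} \<union> {N\<in>partial_matchings S. a \<in> \<Union>N} = partial_matchings S"
    by blast
  finally show ?thesis
    unfolding sum_partial_matchings_avoiding[OF assms] sum_partial_matchings_covering[OF assms]
      matching_sum_def[of S]
    by simp
qed

lemma matching_sum_eq_hermite: "finite S \<Longrightarrow> matching_sum S x = hermite (card S) x"
proof (induction "card S" arbitrary: S rule: less_induct)
  case less
  show ?case
  proof (cases "S = {}")
    case True
    then show ?thesis by (simp add: matching_sum_def partial_matchings_empty)
  next
    case False
    then obtain a where a: "a \<in> S" by auto
    have rec: "matching_sum S x
        = x * matching_sum (S - {a}) x - (\<Sum>b\<in>S - {a}. matching_sum (S - {a} - {b}) x)"
      by (rule matching_sum_rec[OF less.prems a])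
    have less_S: "card (S - {a}) < card S" using a less.prems by (meson card_Diff1_less)
    show ?thesis
    proof (cases "S - {a} = {}")
      case True
      then have "S = {a}" using a by auto
      then show ?thesis using rec True by (simp add: matching_sum_def partial_matchings_empty)
    next
      case False
      then obtain k where k: "card (S - {a}) = Suc k"
        using less.prems by (metis card_0_eq finite_Diff not0_implies_Suc)
      have card_S: "card S = Suc (Suc k)" using k a less.prems by (metis card_Suc_Diff1)
      have "matching_sum (S - {a}) x = hermite (Suc k) x"
        using less.hyps[OF less_S] less.prems k by simp
      moreover have "matching_sum (S - {a} - {b}) x = hermite k x" if "b \<in> S - {a}" for b
      proof -
        have "card (S - {a} - {b}) = k" "card (S - {a} - {b}) < card S"
          using k that card_S by simp_all
        then show ?thesis using less.hyps less.prems by simp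
      qed
      ultimately show ?thesis using rec card_S k by simp
    qed
  qed
qed

section \<open>Orthogonality of Hermite polynomials\<close>

abbreviation std_normal :: "real measure" where
  "std_normal \<equiv> density lborel std_normal_density"

definition std_normal_moment :: "nat \<Rightarrow> real" where
  "std_normal_moment k = (\<integral>x. x ^ k \<partial>std_normal)"

lemma std_normal_moment_odd: "odd k \<Longrightarrow> std_normal_moment k = 0"
  unfolding std_normal_moment_def by (rule integral_std_normal_distribution_moment_odd)

lemma std_normal_moment_even: "std_normal_moment (2 * k) = fact (2 * k) / (2 ^ k * fact k)"
  unfolding std_normal_moment_def by (rule std_normal_distribution_even_moments(1))

lemma std_normal_moment_Suc_Suc: "std_normal_moment (Suc (Suc k)) = of_nat (Suc k) * std_normal_moment k"
proof (cases "even k")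
  case True
  then obtain j where j: "k = 2 * j" by (auto elim: evenE)
  have nz: "(2 * of_nat (j + 1) :: real) \<noteq> 0" by simp
  have "Suc (Suc k) = 2 * Suc j" using j by simp
  then have "std_normal_moment (Suc (Suc k)) = fact (2 * Suc j) / (2 ^ Suc j * fact (Suc j))"
    by (simp only: std_normal_moment_even)
  also have "\<dots> = (2 * of_nat (j + 1) * (of_nat (2 * j + 1) * fact (2 * j))) /
      (2 * of_nat (j + 1) * (2 ^ j * fact j))"
    by (simp add: algebra_simps)
  also have "\<dots> = of_nat (2 * j + 1) * (fact (2 * j) / (2 ^ j * fact j))"
    by (simp only: mult_divide_mult_cancel_left[OF nz]) simp
  also have "\<dots> = of_nat (Suc k) * std_normal_moment k"
    using j by (simp add: std_normal_moment_even)
  finally show ?thesis .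
next
  case False
  then show ?thesis by (simp add: std_normal_moment_odd)
qed

lemma integrable_std_normal_poly: "integrable std_normal (poly p)"
proof -
  have "integrable std_normal (\<lambda>x. \<Sum>i\<le>degree p. coeff p i * x ^ i)"
    by (intro Bochner_Integration.integrable_sum integrable_mult_right
        integrable_std_normal_distribution_moment)
  moreover have "poly p = (\<lambda>x. \<Sum>i\<le>degree p. coeff p i * x ^ i)"
    by (rule ext) (rule poly_altdef)
  ultimately show ?thesis by simp
qed

lemma integral_std_normal_monom: "(\<integral>x. poly (monom c k) x \<partial>std_normal) = c * std_normal_moment k"
  by (simp add: poly_monom std_normal_moment_def)

lemma std_normal_stein_identity_monom:
  "(\<integral>x. poly (pCons 0 (monom c i)) x \<partial>std_normal) = (\<integral>x. poly (pderiv (monom c i)) x \<partial>std_normal)"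
proof -
  have "(\<integral>x. poly (pCons 0 (monom c i)) x \<partial>std_normal) = c * std_normal_moment (Suc i)"
    by (simp only: monom_Suc[symmetric] integral_std_normal_monom)
  also have "\<dots> = (\<integral>x. poly (pderiv (monom c i)) x \<partial>std_normal)"
  proof (cases i)
    case 0
    then show ?thesis
      by (simp add: pderiv_monom std_normal_moment_odd)
  next
    case (Suc j)
    then show ?thesis
      by (simp add: pderiv_monom integral_std_normal_monom std_normal_moment_Suc_Suc del: of_nat_Suc)
  qed
  finally show ?thesis .
qed

lemma std_normal_stein_identity:
  "(\<integral>x. poly (pCons 0 q) x \<partial>std_normal) = (\<integral>x. poly (pderiv q) x \<partial>std_normal)"
proof -
  define D where "D q = (\<integral>x. poly (pCons 0 q) x \<partial>std_normal) - (\<integral>x. poly (pderiv q) x \<partial>std_normal)"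
    for q :: "real poly"
  have D_add: "D (p + r) = D p + D r" for p r
  proof -
    have "pCons 0 (p + r) = pCons 0 p + pCons 0 r" by simp
    moreover have "(\<integral>x. poly (f + g) x \<partial>std_normal) =
        (\<integral>x. poly f x \<partial>std_normal) + (\<integral>x. poly g x \<partial>std_normal)" for f g
      by (simp add: integrable_std_normal_poly)
    ultimately show ?thesis unfolding D_def by (simp only: pderiv_add)
  qed
  have D_sum: "D (\<Sum>i\<in>I. f i) = (\<Sum>i\<in>I. D (f i))" if "finite I" for I and f :: "nat \<Rightarrow> real poly"
    using that by (induction I rule: finite_induct) (simp_all add: D_add, simp add: D_def)
  have "D q = (\<Sum>i\<le>degree q. D (monom (coeff q i) i))"
    by (subst poly_as_sum_of_monoms[symmetric]) (simp add: D_sum)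
  also have "\<dots> = 0"
    by (simp add: D_def std_normal_stein_identity_monom del: poly_pCons)
  finally show ?thesis by (simp add: D_def del: poly_pCons)
qed

abbreviation hermite_poly :: "nat \<Rightarrow> real poly" where
  "hermite_poly k \<equiv> hermite k [:0, 1:]"

lemma poly_hermite_poly: "poly (hermite_poly k) x = hermite k x"
  by (induction k x rule: hermite.induct) (simp_all add: algebra_simps)

lemma degree_hermite_le: "degree (hermite k p) \<le> k * degree p"
proof (induction k p rule: hermite.induct)
  case (3 k p)
  have "degree (p * hermite (Suc k) p) \<le> Suc (Suc k) * degree p"
    using 3 degree_mult_le[of p "hermite (Suc k) p"] by simp
  moreover have "degree (of_nat (Suc k) * hermite k p) \<le> Suc (Suc k) * degree p"
    using 3 degree_smult_le[of "of_nat (Suc k)" "hermite k p"] mult_le_mono1[of k "Suc (Suc k)"]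
    by (simp add: of_nat_mult_conv_smult del: of_nat_Suc)
  ultimately show ?case by (simp add: degree_diff_le del: of_nat_Suc)
qed simp_all

lemma hermite_poly_Suc_Suc:
  "hermite_poly (Suc (Suc k)) = pCons 0 (hermite_poly (Suc k)) - smult (of_nat (Suc k)) (hermite_poly k)"
  by (simp add: of_nat_mult_conv_smult del: of_nat_Suc)

lemma hermite_poly_Suc:
  "pderiv (hermite_poly (Suc k)) = smult (of_nat (Suc k)) (hermite_poly k)"
  "hermite_poly (Suc k) = pCons 0 (hermite_poly k) - pderiv (hermite_poly k)"
proof (induction k)
  case 0
  show "pderiv (hermite_poly (Suc 0)) = smult (of_nat (Suc 0)) (hermite_poly 0)"
    "hermite_poly (Suc 0) = pCons 0 (hermite_poly 0) - pderiv (hermite_poly 0)"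
    by (simp_all add: pderiv_pCons one_pCons)
next
  case (Suc k)
  show rec: "hermite_poly (Suc (Suc k)) = pCons 0 (hermite_poly (Suc k)) - pderiv (hermite_poly (Suc k))"
    unfolding hermite_poly_Suc_Suc Suc.IH(1) ..
  have "pderiv (hermite_poly (Suc (Suc k)))
      = hermite_poly (Suc k) + pCons 0 (pderiv (hermite_poly (Suc k))) -
      smult (of_nat (Suc k)) (pderiv (hermite_poly k))"
    by (simp only: hermite_poly_Suc_Suc pderiv_diff pderiv_smult pderiv_pCons)
  also have "\<dots>
      = hermite_poly (Suc k) + smult (of_nat (Suc k)) (pCons 0 (hermite_poly k) - pderiv (hermite_poly k))"
    by (simp add: Suc.IH(1) smult_diff_right del: of_nat_Suc)
  also have "\<dots> = smult (of_nat (Suc (Suc k))) (hermite_poly (Suc k))"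
    by (simp only: Suc.IH(2)[symmetric] of_nat_Suc[of "Suc k"] smult_add_left) simp
  finally show "pderiv (hermite_poly (Suc (Suc k)))
      = smult (of_nat (Suc (Suc k))) (hermite_poly (Suc k))" .
qed

lemma integral_hermite_poly_Suc_mult:
  "(\<integral>x. poly (hermite_poly (Suc a) * q) x \<partial>std_normal) =
    (\<integral>x. poly (hermite_poly a * pderiv q) x \<partial>std_normal)"
proof -
  have "hermite_poly (Suc a) * q = pCons 0 (hermite_poly a * q) - pderiv (hermite_poly a) * q"
    by (simp add: hermite_poly_Suc(2)[of a] left_diff_distrib del: hermite.simps)
  then have "(\<integral>x. poly (hermite_poly (Suc a) * q) x \<partial>std_normal) =
      (\<integral>x. poly (pderiv (hermite_poly a * q)) x \<partial>std_normal) -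
      (\<integral>x. poly (pderiv (hermite_poly a) * q) x \<partial>std_normal)"
    by (simp add: integrable_std_normal_poly std_normal_stein_identity[symmetric] del: poly_pCons poly_mult)
  also have "\<dots> = (\<integral>x. poly (hermite_poly a * pderiv q) x \<partial>std_normal)"
    by (simp add: pderiv_mult integrable_std_normal_poly mult.commute del: poly_mult)
  finally show ?thesis .
qed

lemma integral_hermite_poly_mult_eq_0:
  "degree q < a \<or> q = 0 \<Longrightarrow> (\<integral>x. poly (hermite_poly a * q) x \<partial>std_normal) = 0"
proof (induction a arbitrary: q)
  case (Suc a)
  have "degree (pderiv q) < a \<or> pderiv q = 0"
    using Suc.prems by (cases "degree q") (auto simp: pderiv_eq_0_iff degree_pderiv)
  then show ?case by (simp only: integral_hermite_poly_Suc_mult Suc.IH)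
qed (simp add: poly_0[abs_def])

lemma hermite_mult_hermite_eq_poly:
  "(\<lambda>x. hermite a x * hermite b x :: real) = poly (hermite_poly a * hermite_poly b)"
  by (rule ext) (simp add: poly_hermite_poly del: hermite.simps)

lemma integrable_hermite_mult_hermite: "integrable std_normal (\<lambda>x. hermite a x * hermite b x :: real)"
  unfolding hermite_mult_hermite_eq_poly by (rule integrable_std_normal_poly)

lemma integral_hermite_mult_hermite:
  assumes "a \<noteq> b"
  shows "(\<integral>x. hermite a x * hermite b x \<partial>std_normal) = (0::real)"
proof -
  have *: "(\<integral>x. hermite a x * hermite b x \<partial>std_normal) = 0" if "b < a" for a b
    unfolding hermite_mult_hermite_eq_poly
    using degree_hermite_le[of b "[:0, 1::real:]"] that
      by (intro integral_hermite_poly_mult_eq_0) simp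
  show ?thesis
    using assms *[of a b] *[of b a] by (cases "b < a") (simp_all add: mult.commute)
qed

lemma product_hermite_orthogonal:
  fixes f g :: "'j::finite \<Rightarrow> nat"
  assumes "(\<Sum>j\<in>UNIV. f j) \<noteq> (\<Sum>j\<in>UNIV. g j)"
  shows "integrable (PiM UNIV (\<lambda>_. std_normal))
      (\<lambda>x. (\<Prod>j\<in>UNIV. hermite (f j) (x j)) * (\<Prod>j\<in>UNIV. hermite (g j) (x j)))"
    and "(\<integral>x. (\<Prod>j\<in>UNIV. hermite (f j) (x j)) * (\<Prod>j\<in>UNIV. hermite (g j) (x j))
      \<partial>PiM UNIV (\<lambda>_. std_normal)) = (0::real)"
proof -
  interpret product_prob_space "\<lambda>_::'j. std_normal"
    by (simp add: product_prob_space_def product_prob_space_axioms_def product_sigma_finite_def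
        prob_space_normal_density prob_space_imp_sigma_finite)
  have eq: "(\<lambda>x. (\<Prod>j\<in>UNIV. hermite (f j) (x j)) * (\<Prod>j\<in>UNIV. hermite (g j) (x j))) =
      (\<lambda>x. \<Prod>j\<in>UNIV. (\<lambda>j y. hermite (f j) y * hermite (g j) y :: real) j (x j))"
    by (simp add: prod.distrib)
  show "integrable (PiM UNIV (\<lambda>_. std_normal))
      (\<lambda>x. (\<Prod>j\<in>UNIV. hermite (f j) (x j)) * (\<Prod>j\<in>UNIV. hermite (g j) (x j)))"
    unfolding eq by (rule product_integrable_prod) (simp_all add: integrable_hermite_mult_hermite)
  obtain j where j: "f j \<noteq> g j" using assms by (metis sum.cong)
  have "(\<integral>x. (\<Prod>j\<in>UNIV. hermite (f j) (x j)) * (\<Prod>j\<in>UNIV. hermite (g j) (x j))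
      \<partial>PiM UNIV (\<lambda>_. std_normal)) = (\<Prod>j\<in>UNIV. \<integral>y. hermite (f j) y * hermite (g j) y \<partial>std_normal)"
    unfolding eq by (rule product_integral_prod) (simp_all add: integrable_hermite_mult_hermite)
  also have "\<dots> = 0"
    using j integral_hermite_mult_hermite by (intro prod_zero) auto
  finally show "(\<integral>x. (\<Prod>j\<in>UNIV. hermite (f j) (x j)) * (\<Prod>j\<in>UNIV. hermite (g j) (x j))
      \<partial>PiM UNIV (\<lambda>_. std_normal)) = 0" .
qed

section \<open>Matching collections and the graph \<open>\<Gamma>\<^sub>M\<close>\<close>

definition gamma_class :: "'v mgraph \<Rightarrow> (nat \<times> bool) set set \<Rightarrow> nat \<times> bool \<Rightarrow> (nat \<times> bool) set" where
  "gamma_class es M h = (gamma_adj es M)\<^sup>* `` {h}"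

lemma finite_halfedges [simp]: "finite (halfedges es)"
  by (simp add: halfedges_def)

lemma card_halfedges: "card (halfedges es) = 2 * length es"
  by (simp add: halfedges_def card_cartesian_product)

lemma gamma_adj_sym: "(h, h') \<in> gamma_adj es M \<Longrightarrow> (h', h) \<in> gamma_adj es M"
  by (auto simp: gamma_adj_def insert_commute)

lemma gamma_rtrancl_sym: "(h, h') \<in> (gamma_adj es M)\<^sup>* \<Longrightarrow> (h', h) \<in> (gamma_adj es M)\<^sup>*"
proof (induction rule: rtrancl_induct)
  case (step y z)
  then show ?case by (meson converse_rtrancl_into_rtrancl gamma_adj_sym)
qed simp

lemma gamma_rtrancl_halfedges:
  "(h, h') \<in> (gamma_adj es M)\<^sup>* \<Longrightarrow> h \<in> halfedges es \<Longrightarrow> h' \<in> halfedges es"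
  by (induction rule: rtrancl_induct) (auto simp: gamma_adj_def)

lemma mem_gamma_class: "h' \<in> gamma_class es M h \<longleftrightarrow> (h, h') \<in> (gamma_adj es M)\<^sup>*"
  by (simp add: gamma_class_def)

lemma gamma_class_self: "h \<in> gamma_class es M h"
  by (simp add: gamma_class_def)

lemma gamma_class_subset: "h \<in> halfedges es \<Longrightarrow> gamma_class es M h \<subseteq> halfedges es"
  using gamma_rtrancl_halfedges by (auto simp: gamma_class_def)

lemma gamma_class_eq: "h' \<in> gamma_class es M h \<Longrightarrow> gamma_class es M h' = gamma_class es M h"
  unfolding gamma_class_def by (auto intro: rtrancl_trans dest: gamma_rtrancl_sym)

lemma gamma_comps_eq: "gamma_comps es M = gamma_class es M ` halfedges es"
  unfolding gamma_comps_def quotient_def gamma_class_def by blast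

lemma finite_gamma_comps [simp]: "finite (gamma_comps es M)"
  by (simp add: gamma_comps_eq)

lemma gamma_comps_eq_class: "C \<in> gamma_comps es M \<Longrightarrow> h \<in> C \<Longrightarrow> C = gamma_class es M h"
  by (auto simp: gamma_comps_eq gamma_class_eq)

lemma gamma_comps_subset: "C \<in> gamma_comps es M \<Longrightarrow> C \<subseteq> halfedges es"
  by (auto simp: gamma_comps_eq dest: gamma_class_subset)

lemma gamma_comps_nonempty: "C \<in> gamma_comps es M \<Longrightarrow> C \<noteq> {}"
  unfolding gamma_comps_eq using gamma_class_self by (metis empty_iff imageE)

lemma gamma_adj_edge: "h \<in> halfedges es \<Longrightarrow> (h, (fst h, \<not> snd h)) \<in> gamma_adj es M"
  by (cases h) (auto simp: gamma_adj_def halfedges_def)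

lemma gamma_class_first_halfedge:
  assumes "h \<in> halfedges es"
  shows "gamma_class es M (fst h, False) = gamma_class es M h"
proof (cases "snd h")
  case True
  then have "(h, (fst h, False)) \<in> gamma_adj es M" using gamma_adj_edge[OF assms] by simp
  then have "(fst h, False) \<in> gamma_class es M h" by (auto simp: gamma_class_def)
  then show ?thesis by (rule gamma_class_eq)
qed (cases h, simp)

lemma matched_iff: "matched M h \<longleftrightarrow> h \<in> \<Union>M"
  by (auto simp: matched_def)

lemma gamma_comps_cycle_path:
  "gamma_comps es M = cycle_comps es M \<union> path_comps es M"
  "cycle_comps es M \<inter> path_comps es M = {}"
  by (auto simp: cycle_comps_def path_comps_def)

lemma cycle_comps_unmatched: "C \<in> cycle_comps es M \<Longrightarrow> C \<inter> (halfedges es - \<Union>M) = {}"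
  by (auto simp: cycle_comps_def matched_iff)

lemma path_comps_unmatched: "C \<in> path_comps es M \<Longrightarrow> C \<inter> (halfedges es - \<Union>M) = path_ends M C"
  by (auto simp: path_comps_def path_ends_def matched_iff dest: gamma_comps_subset)

lemma matching_collsD:
  assumes "M \<in> matching_colls es" "p \<in> M"
  shows "\<exists>h h'. p = {h, h'} \<and> h \<noteq> h' \<and> h \<in> halfedges es \<and> h' \<in> halfedges es \<and> hv es h = hv es h'"
  using assms unfolding matching_colls_def by blast

lemma matching_colls_disjoint:
  assumes "M \<in> matching_colls es" "p \<in> M" "q \<in> M" "p \<noteq> q"
  shows "p \<inter> q = {}"
  using assms unfolding matching_colls_def by blast

lemma matching_colls_pair_subset: "M \<in> matching_colls es \<Longrightarrow> p \<in> M \<Longrightarrow> p \<subseteq> halfedges es"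
  using matching_collsD by fastforce

lemma matching_colls_pair_nonempty: "M \<in> matching_colls es \<Longrightarrow> p \<in> M \<Longrightarrow> \<exists>h. h \<in> p"
  using matching_collsD by blast

lemma finite_matching_colls [simp]: "finite (matching_colls es)"
  by (rule finite_subset[of _ "Pow (Pow (halfedges es))"]) (auto dest: matching_colls_pair_subset)

lemma finite_matching_coll: "M \<in> matching_colls es \<Longrightarrow> finite M"
  by (rule finite_subset[of _ "Pow (halfedges es)"]) (auto dest: matching_colls_pair_subset)

lemma empty_in_matching_colls: "{} \<in> matching_colls es"
  by (simp add: matching_colls_def)

lemma matching_colls_pair_gamma_adj:
  assumes "M \<in> matching_colls es" "p \<in> M" "h \<in> p" "h' \<in> p" "h \<noteq> h'"
  shows "(h, h') \<in> gamma_adj es M"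
proof -
  obtain a b where "p = {a, b}" "a \<in> halfedges es" "b \<in> halfedges es"
    using matching_collsD[OF assms(1,2)] by blast
  then show ?thesis using assms unfolding gamma_adj_def by (auto simp: insert_commute)
qed

lemma matching_colls_pair_gamma_class:
  assumes "M \<in> matching_colls es" "p \<in> M" "h \<in> p" "h' \<in> p"
  shows "gamma_class es M h' = gamma_class es M h"
proof (cases "h = h'")
  case False
  then have "h' \<in> gamma_class es M h"
    using matching_colls_pair_gamma_adj[OF assms False] by (auto simp: gamma_class_def)
  then show ?thesis by (rule gamma_class_eq)
qed simp

lemma card_Union_matching_coll:
  assumes M: "M \<in> matching_colls es"
  shows "card (\<Union>M) = 2 * card M"
proof -
  have "card (\<Union>M) = (\<Sum>p\<in>M. card p)"
  proof (rule card_Union_disjoint)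
    show "pairwise disjnt M"
      using matching_colls_disjoint[OF M] by (auto simp: pairwise_def disjnt_def)
    show "\<And>p. p \<in> M \<Longrightarrow> finite p"
      using matching_colls_pair_subset[OF M] by (meson finite_halfedges finite_subset)
  qed
  also have "\<dots> = (\<Sum>p\<in>M. 2)"
  proof (rule sum.cong[OF refl])
    fix p assume "p \<in> M"
    then obtain h h' where "p = {h, h'}" "h \<noteq> h'" using matching_collsD[OF M] by blast
    then show "card p = 2" by simp
  qed
  finally show ?thesis by simp
qed

lemma card_unmatched:
  assumes M: "M \<in> matching_colls es"
  shows "card (halfedges es - \<Union>M) = 2 * length es - 2 * card M"
    and "card M \<le> length es"
proof -
  have sub: "\<Union>M \<subseteq> halfedges es" using matching_colls_pair_subset[OF M] by blast
  then have "card (\<Union>M) \<le> card (halfedges es)" by (simp add: card_mono)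
  then show "card M \<le> length es" using card_Union_matching_coll[OF M] card_halfedges[of es] by simp
  show "card (halfedges es - \<Union>M) = 2 * length es - 2 * card M"
    using card_Diff_subset[OF finite_subset[OF sub] sub] card_Union_matching_coll[OF M]
      card_halfedges[of es] by simp
qed

section \<open>The Hermite expansion of \<open>p\<^sub>G\<close>\<close>

definition label_compatible :: "(nat \<Rightarrow> 'n) \<Rightarrow> (nat \<times> bool) set set \<Rightarrow> bool" where
  "label_compatible \<sigma> M \<longleftrightarrow> (\<forall>p\<in>M. \<forall>h\<in>p. \<forall>h'\<in>p. \<sigma> (fst h) = \<sigma> (fst h'))"

lemma label_compatible_rtrancl:
  assumes "label_compatible \<sigma> M" "(h, h') \<in> (gamma_adj es M)\<^sup>*"
  shows "\<sigma> (fst h) = \<sigma> (fst h')"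
  using assms(2)
proof (induction rule: rtrancl_induct)
  case (step y z)
  then have "fst y = fst z \<or> {y, z} \<in> M" by (auto simp: gamma_adj_def)
  moreover have "\<sigma> (fst y) = \<sigma> (fst z)" if "{y, z} \<in> M"
  proof -
    have "\<forall>h\<in>{y, z}. \<forall>h'\<in>{y, z}. \<sigma> (fst h) = \<sigma> (fst h')"
      using assms(1) that unfolding label_compatible_def by (rule bspec)
    then show ?thesis by blast
  qed
  ultimately show ?case using step by auto
qed simp

definition edge_labelling :: "'v mgraph \<Rightarrow> (nat \<times> bool) set set \<Rightarrow> ((nat \<times> bool) set \<Rightarrow> 'n) \<Rightarrow> nat \<Rightarrow> 'n" where
  "edge_labelling es M \<tau> j = (if j < length es then \<tau> (gamma_class es M (j, False)) else undefined)"

definition comp_labelling :: "'v mgraph \<Rightarrow> (nat \<times> bool) set set \<Rightarrow> (nat \<Rightarrow> 'n) \<Rightarrow> (nat \<times> bool) set \<Rightarrow> 'n" where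
  "comp_labelling es M \<sigma> C = (if C \<in> gamma_comps es M then \<sigma> (fst (SOME h. h \<in> C)) else undefined)"

lemma comp_labelling_gamma_class:
  assumes "label_compatible \<sigma> M" "h \<in> halfedges es"
  shows "comp_labelling es M \<sigma> (gamma_class es M h) = \<sigma> (fst h)"
proof -
  have C: "gamma_class es M h \<in> gamma_comps es M" using assms(2) by (simp add: gamma_comps_eq)
  then have "(SOME h'. h' \<in> gamma_class es M h) \<in> gamma_class es M h"
    using gamma_comps_nonempty by (simp add: some_in_eq)
  then have "\<sigma> (fst (SOME h'. h' \<in> gamma_class es M h)) = \<sigma> (fst h)"
    using label_compatible_rtrancl[OF assms(1)] gamma_rtrancl_sym by (metis mem_gamma_class)
  then show ?thesis using C by (simp add: comp_labelling_def)
qed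

lemma edge_labelling_comp_labelling:
  assumes "\<sigma> \<in> Pi\<^sub>E {..<length es} (\<lambda>_. UNIV)" "label_compatible \<sigma> M"
  shows "edge_labelling es M (comp_labelling es M \<sigma>) = \<sigma>"
proof
  fix j
  show "edge_labelling es M (comp_labelling es M \<sigma>) j = \<sigma> j"
  proof (cases "j < length es")
    case True
    then have "(j, False) \<in> halfedges es" by (simp add: halfedges_def)
    from comp_labelling_gamma_class[OF assms(2) this] show ?thesis
      using True by (simp add: edge_labelling_def)
  qed (use assms(1) in \<open>simp add: edge_labelling_def PiE_def extensional_def\<close>)
qed

lemma comp_labelling_edge_labelling:
  assumes "\<tau> \<in> Pi\<^sub>E (gamma_comps es M) (\<lambda>_. UNIV)"
  shows "comp_labelling es M (edge_labelling es M \<tau>) = \<tau>"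
proof
  fix C
  show "comp_labelling es M (edge_labelling es M \<tau>) C = \<tau> C"
  proof (cases "C \<in> gamma_comps es M")
    case True
    define h where "h = (SOME h. h \<in> C)"
    have h: "h \<in> C" using gamma_comps_nonempty[OF True] by (simp add: h_def some_in_eq)
    have hH: "h \<in> halfedges es" using gamma_comps_subset[OF True] h by blast
    then have "fst h < length es" by (simp add: halfedges_def mem_Times_iff)
    moreover have "gamma_class es M (fst h, False) = C"
      using gamma_class_first_halfedge[OF hH] gamma_comps_eq_class[OF True h] by simp
    ultimately show ?thesis using True by (simp add: comp_labelling_def edge_labelling_def h_def)
  qed (use assms in \<open>simp add: comp_labelling_def PiE_def extensional_def\<close>)
qed

lemma label_compatible_edge_labelling:
  assumes M: "M \<in> matching_colls es"
  shows "label_compatible (edge_labelling es M \<tau>) M"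
  unfolding label_compatible_def
proof (intro ballI)
  fix p h h' assume p: "p \<in> M" "h \<in> p" "h' \<in> p"
  have hH: "h \<in> halfedges es" "h' \<in> halfedges es"
    using matching_colls_pair_subset[OF M p(1)] p by blast+
  then have "fst h < length es" "fst h' < length es" by (auto simp: halfedges_def mem_Times_iff)
  moreover have "gamma_class es M h = gamma_class es M h'"
    using matching_colls_pair_gamma_class[OF M p] by simp
  ultimately show "edge_labelling es M \<tau> (fst h) = edge_labelling es M \<tau> (fst h')"
    using hH by (simp add: edge_labelling_def gamma_class_first_halfedge)
qed

lemma sum_compatible_labellings_eq_sum_comp_labellings:
  fixes X :: "'v \<Rightarrow> 'n \<Rightarrow> 'a::comm_ring_1"
  assumes M: "M \<in> matching_colls es"
  shows "(\<Sum>\<sigma>\<in>{\<sigma>\<in>Pi\<^sub>E {..<length es} (\<lambda>_. UNIV). label_compatible \<sigma> M}.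
            \<Prod>h\<in>halfedges es - \<Union>M. X (hv es h) (\<sigma> (fst h))) =
    (\<Sum>\<tau>\<in>Pi\<^sub>E (gamma_comps es M) (\<lambda>_. UNIV).
            \<Prod>h\<in>halfedges es - \<Union>M. X (hv es h) (\<tau> (gamma_class es M h)))"
proof (rule sum.reindex_bij_witness[where i = "edge_labelling es M" and j = "comp_labelling es M"])
  fix \<sigma> :: "nat \<Rightarrow> 'n" assume "\<sigma> \<in> {\<sigma>\<in>Pi\<^sub>E {..<length es} (\<lambda>_. UNIV). label_compatible \<sigma> M}"
  then have \<sigma>: "\<sigma> \<in> Pi\<^sub>E {..<length es} (\<lambda>_. UNIV)" "label_compatible \<sigma> M" by auto
  show "edge_labelling es M (comp_labelling es M \<sigma>) = \<sigma>"
    by (rule edge_labelling_comp_labelling[OF \<sigma>])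
  show "comp_labelling es M \<sigma> \<in> Pi\<^sub>E (gamma_comps es M) (\<lambda>_. UNIV)"
    by (simp add: comp_labelling_def PiE_def extensional_def)
  show "(\<Prod>h\<in>halfedges es - \<Union>M. X (hv es h) (comp_labelling es M \<sigma> (gamma_class es M h))) =
      (\<Prod>h\<in>halfedges es - \<Union>M. X (hv es h) (\<sigma> (fst h)))"
  proof (rule prod.cong[OF refl])
    fix h assume "h \<in> halfedges es - \<Union>M"
    then show "X (hv es h) (comp_labelling es M \<sigma> (gamma_class es M h)) = X (hv es h) (\<sigma> (fst h))"
      using comp_labelling_gamma_class[OF \<sigma>(2), of h es] by simp
  qed
next
  fix \<tau> :: "(nat \<times> bool) set \<Rightarrow> 'n" assume \<tau>: "\<tau> \<in> Pi\<^sub>E (gamma_comps es M) (\<lambda>_. UNIV)"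
  show "comp_labelling es M (edge_labelling es M \<tau>) = \<tau>"
    by (rule comp_labelling_edge_labelling[OF \<tau>])
  show "edge_labelling es M \<tau> \<in> {\<sigma>\<in>Pi\<^sub>E {..<length es} (\<lambda>_. UNIV). label_compatible \<sigma> M}"
    using label_compatible_edge_labelling[OF M]
    by (simp add: edge_labelling_def PiE_def extensional_def)
qed

lemma prod_unmatched_by_comps:
  "(\<Prod>h\<in>halfedges es - \<Union>M. f h (gamma_class es M h)) =
    (\<Prod>C\<in>gamma_comps es M. \<Prod>h\<in>C \<inter> (halfedges es - \<Union>M). f h C)"
proof -
  let ?U = "halfedges es - \<Union>M"
  have "(\<Prod>h\<in>?U. f h (gamma_class es M h)) =
      (\<Prod>C\<in>gamma_comps es M. \<Prod>h\<in>{h. h \<in> ?U \<and> gamma_class es M h = C}. f h (gamma_class es M h))"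
    by (rule prod.group[symmetric]) (auto simp: gamma_comps_eq)
  also have "\<dots> = (\<Prod>C\<in>gamma_comps es M. \<Prod>h\<in>C \<inter> ?U. f h C)"
  proof (rule prod.cong[OF refl])
    fix C assume C: "C \<in> gamma_comps es M"
    have "{h. h \<in> ?U \<and> gamma_class es M h = C} = C \<inter> ?U"
      using gamma_comps_eq_class[OF C] gamma_class_self by blast
    then show "(\<Prod>h\<in>{h. h \<in> ?U \<and> gamma_class es M h = C}. f h (gamma_class es M h)) =
        (\<Prod>h\<in>C \<inter> ?U. f h C)"
      by (auto intro: prod.cong)
  qed
  finally show ?thesis .
qed

lemma sum_compatible_labellings:
  fixes X :: "'v \<Rightarrow> 'n::finite \<Rightarrow> 'a::comm_ring_1"
  assumes M: "M \<in> matching_colls es"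
  shows "(\<Sum>\<sigma>\<in>{\<sigma>\<in>Pi\<^sub>E {..<length es} (\<lambda>_. UNIV). label_compatible \<sigma> M}.
            \<Prod>h\<in>halfedges es - \<Union>M. X (hv es h) (\<sigma> (fst h)))
       = of_nat CARD('n) ^ card (cycle_comps es M) *
         (\<Prod>C\<in>path_comps es M. \<Sum>i\<in>UNIV. \<Prod>h\<in>path_ends M C. X (hv es h) i)"
proof -
  let ?U = "halfedges es - \<Union>M"
  let ?F = "\<lambda>C. \<Sum>i\<in>UNIV. \<Prod>h\<in>C \<inter> ?U. X (hv es h) i"
  have "(\<Sum>\<sigma>\<in>{\<sigma>\<in>Pi\<^sub>E {..<length es} (\<lambda>_. UNIV). label_compatible \<sigma> M}.
            \<Prod>h\<in>?U. X (hv es h) (\<sigma> (fst h))) =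
      (\<Sum>\<tau>\<in>Pi\<^sub>E (gamma_comps es M) (\<lambda>_. UNIV). \<Prod>C\<in>gamma_comps es M. \<Prod>h\<in>C \<inter> ?U. X (hv es h) (\<tau> C))"
    unfolding sum_compatible_labellings_eq_sum_comp_labellings[OF M]
    by (rule sum.cong[OF refl]) (rule prod_unmatched_by_comps)
  also have "\<dots> = (\<Prod>C\<in>gamma_comps es M. ?F C)"
    by (rule prod_sum_PiE[symmetric]) auto
  also have "\<dots> = (\<Prod>C\<in>cycle_comps es M. ?F C) * (\<Prod>C\<in>path_comps es M. ?F C)"
    by (subst gamma_comps_cycle_path(1), rule prod.union_disjoint)
       (auto simp: gamma_comps_cycle_path(2) cycle_comps_def path_comps_def)
  also have "\<dots> = of_nat CARD('n) ^ card (cycle_comps es M) *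
      (\<Prod>C\<in>path_comps es M. \<Sum>i\<in>UNIV. \<Prod>h\<in>path_ends M C. X (hv es h) i)"
    by (simp add: cycle_comps_unmatched path_comps_unmatched)
  finally show ?thesis .
qed

definition label_class :: "'v mgraph \<Rightarrow> (nat \<Rightarrow> 'n) \<Rightarrow> 'v \<times> 'n \<Rightarrow> (nat \<times> bool) set" where
  "label_class es \<sigma> k = {h \<in> halfedges es. (hv es h, \<sigma> (fst h)) = k}"

lemma label_class_disjoint: "k \<noteq> k' \<Longrightarrow> label_class es \<sigma> k \<inter> label_class es \<sigma> k' = {}"
  by (auto simp: label_class_def)

lemma finite_label_class [simp]: "finite (label_class es \<sigma> k)"
  by (rule finite_subset[of _ "halfedges es"]) (auto simp: label_class_def)

lemma cnt_eq_card_label_class: "cnt es \<sigma> u i = card (label_class es \<sigma> (u, i))"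
  by (simp add: cnt_def label_class_def)

lemma label_compatible_pair_subset:
  assumes "M \<in> matching_colls es" "label_compatible \<sigma> M" "p \<in> M" "h \<in> p"
  shows "p \<subseteq> label_class es \<sigma> (hv es h, \<sigma> (fst h))"
proof
  fix h' assume h': "h' \<in> p"
  obtain a b where ab: "p = {a, b}" "a \<in> halfedges es" "b \<in> halfedges es" "hv es a = hv es b"
    using matching_collsD[OF assms(1,3)] by blast
  have "hv es h' = hv es h" using ab h' assms(4) by auto
  moreover have "\<sigma> (fst h') = \<sigma> (fst h)"
  proof -
    have "\<forall>x\<in>p. \<forall>y\<in>p. \<sigma> (fst x) = \<sigma> (fst y)"
      using assms(2,3) unfolding label_compatible_def by (rule bspec)
    then show ?thesis using h' assms(4) by blast
  qed
  moreover have "h' \<in> halfedges es" using ab h' by auto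
  ultimately show "h' \<in> label_class es \<sigma> (hv es h, \<sigma> (fst h))" by (simp add: label_class_def)
qed

lemma matching_coll_restrict_label_class:
  assumes M: "M \<in> matching_colls es"
  shows "{p\<in>M. p \<subseteq> label_class es \<sigma> k} \<in> partial_matchings (label_class es \<sigma> k)"
proof (rule partial_matchingsI)
  fix p assume p: "p \<in> {p\<in>M. p \<subseteq> label_class es \<sigma> k}"
  then have "p \<in> M" by simp
  then obtain a b where ab: "p = {a, b}" "a \<noteq> b" using matching_collsD[OF M] by blast
  have "a \<in> label_class es \<sigma> k" "b \<in> label_class es \<sigma> k" using p ab by auto
  then show "\<exists>a b. p = {a, b} \<and> a \<noteq> b \<and> a \<in> label_class es \<sigma> k \<and> b \<in> label_class es \<sigma> k"
    using ab by blast
next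
  fix p q assume "p \<in> {p\<in>M. p \<subseteq> label_class es \<sigma> k}" "q \<in> {p\<in>M. p \<subseteq> label_class es \<sigma> k}" "p \<noteq> q"
  then show "p \<inter> q = {}" using matching_colls_disjoint[OF M] by blast
qed

lemma Union_restrict_label_classes:
  assumes "M \<in> matching_colls es" "label_compatible \<sigma> M"
  shows "(\<Union>k. {p\<in>M. p \<subseteq> label_class es \<sigma> k}) = M"
proof (intro equalityI subsetI)
  fix p assume "p \<in> M"
  moreover obtain h where "h \<in> p" using matching_colls_pair_nonempty[OF assms(1) \<open>p \<in> M\<close>] by blast
  ultimately show "p \<in> (\<Union>k. {p\<in>M. p \<subseteq> label_class es \<sigma> k})"
    using label_compatible_pair_subset[OF assms] by blast
qed auto

lemma Union_partial_matchings_label_classes: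
  assumes N: "\<And>k. N k \<in> partial_matchings (label_class es \<sigma> k)"
  shows "(\<Union>k. N k) \<in> matching_colls es" "label_compatible \<sigma> (\<Union>k. N k)"
proof -
  have sub: "p \<subseteq> label_class es \<sigma> k" if "p \<in> N k" for p k
    using that partial_matchings_subset_Pow N by blast
  show "(\<Union>k. N k) \<in> matching_colls es"
    unfolding matching_colls_def mem_Collect_eq
  proof (intro conjI ballI impI)
    fix p assume "p \<in> (\<Union>k. N k)"
    then obtain k where p: "p \<in> N k" by blast
    obtain a b where "p = {a, b}" "a \<noteq> b" "a \<in> label_class es \<sigma> k" "b \<in> label_class es \<sigma> k"
      using partial_matchingsD[OF N p] by blast
    then show "\<exists>h h'. p = {h, h'} \<and> h \<noteq> h' \<and> h \<in> halfedges es \<and> h' \<in> halfedges es \<and> hv es h = hv es h'"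
      by (intro exI[of _ a] exI[of _ b]) (auto simp: label_class_def)
  next
    fix p q assume pq: "p \<in> (\<Union>k. N k)" "q \<in> (\<Union>k. N k)" "p \<noteq> q"
    then obtain k k' where p: "p \<in> N k" "q \<in> N k'" by blast
    show "p \<inter> q = {}"
    proof (cases "k = k'")
      case True
      then show ?thesis using partial_matchings_disjoint[OF N] p pq(3) by blast
    next
      case False
      then show ?thesis using sub[OF p(1)] sub[OF p(2)] label_class_disjoint[OF False] by blast
    qed
  qed
  show "label_compatible \<sigma> (\<Union>k. N k)"
    unfolding label_compatible_def
  proof (intro ballI)
    fix p h h' assume "p \<in> (\<Union>k. N k)" "h \<in> p" "h' \<in> p"
    then obtain k where "h \<in> label_class es \<sigma> k" "h' \<in> label_class es \<sigma> k" using sub by blast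
    then show "\<sigma> (fst h) = \<sigma> (fst h')" by (auto simp: label_class_def)
  qed
qed

lemma restrict_Union_partial_matchings_label_classes:
  assumes N: "\<And>k. N k \<in> partial_matchings (label_class es \<sigma> k)"
  shows "{p\<in>(\<Union>k. N k). p \<subseteq> label_class es \<sigma> k} = N k"
proof (intro equalityI subsetI)
  fix p assume "p \<in> {p\<in>(\<Union>k. N k). p \<subseteq> label_class es \<sigma> k}"
  then obtain k' where p: "p \<in> N k'" "p \<subseteq> label_class es \<sigma> k" by blast
  have "p \<subseteq> label_class es \<sigma> k'" using p(1) partial_matchings_subset_Pow N by blast
  moreover have "p \<noteq> {}" using partial_matchingsD[OF N p(1)] by blast
  ultimately have "k = k'" using p(2) label_class_disjoint by blast
  then show "p \<in> N k" using p by simp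
next
  fix p assume "p \<in> N k"
  then show "p \<in> {p\<in>(\<Union>k. N k). p \<subseteq> label_class es \<sigma> k}"
    using partial_matchings_subset_Pow N by blast
qed

lemma card_matching_coll_by_label_classes:
  assumes "M \<in> matching_colls es" "label_compatible \<sigma> M"
  shows "card M = (\<Sum>k\<in>UNIV. card {p\<in>M. p \<subseteq> label_class es \<sigma> (k :: 'v::finite \<times> 'n::finite)})"
proof -
  have "{p\<in>M. p \<subseteq> label_class es \<sigma> k} \<inter> {p\<in>M. p \<subseteq> label_class es \<sigma> k'} = {}" if "k \<noteq> k'" for k k'
    using label_class_disjoint[OF that] matching_colls_pair_nonempty[OF assms(1)] by blast
  then have "card (\<Union>k. {p\<in>M. p \<subseteq> label_class es \<sigma> (k :: 'v \<times> 'n)}) =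
      (\<Sum>k\<in>UNIV. card {p\<in>M. p \<subseteq> label_class es \<sigma> k})"
    using finite_matching_coll[OF assms(1)] by (intro card_UN_disjoint) auto
  then show ?thesis by (simp only: Union_restrict_label_classes[OF assms])
qed

lemma label_class_unmatched:
  assumes "M \<in> matching_colls es" "label_compatible \<sigma> M"
  shows "label_class es \<sigma> k - \<Union>{p\<in>M. p \<subseteq> label_class es \<sigma> k} = label_class es \<sigma> k - \<Union>M"
proof (intro equalityI subsetI)
  fix h assume h: "h \<in> label_class es \<sigma> k - \<Union>{p\<in>M. p \<subseteq> label_class es \<sigma> k}"
  have k: "(hv es h, \<sigma> (fst h)) = k" using h by (simp add: label_class_def)
  have "p \<subseteq> label_class es \<sigma> k" if "p \<in> M" "h \<in> p" for p
    using label_compatible_pair_subset[OF assms that] by (simp only: k)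
  then show "h \<in> label_class es \<sigma> k - \<Union>M" using h by blast
qed auto

lemma prod_label_classes_unmatched:
  fixes X :: "'v::finite \<Rightarrow> 'n::finite \<Rightarrow> 'a::comm_ring_1"
  shows "(\<Prod>k\<in>UNIV. X (fst k) (snd k) ^ card (label_class es \<sigma> k - \<Union>M)) =
    (\<Prod>h\<in>halfedges es - \<Union>M. X (hv es h) (\<sigma> (fst h)))"
proof -
  have "(\<Prod>k\<in>UNIV. X (fst k) (snd k) ^ card (label_class es \<sigma> k - \<Union>M)) =
      (\<Prod>k\<in>UNIV. \<Prod>h\<in>{h \<in> halfedges es - \<Union>M. (hv es h, \<sigma> (fst h)) = k}. X (hv es h) (\<sigma> (fst h)))"
  proof (rule prod.cong[OF refl])
    fix k :: "'v \<times> 'n"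
    have "{h \<in> halfedges es - \<Union>M. (hv es h, \<sigma> (fst h)) = k} = label_class es \<sigma> k - \<Union>M"
      by (auto simp: label_class_def)
    moreover have "(\<Prod>h\<in>label_class es \<sigma> k - \<Union>M. X (hv es h) (\<sigma> (fst h))) =
        (\<Prod>h\<in>label_class es \<sigma> k - \<Union>M. X (fst k) (snd k))"
      by (rule prod.cong[OF refl]) (auto simp: label_class_def)
    ultimately show "X (fst k) (snd k) ^ card (label_class es \<sigma> k - \<Union>M) =
        (\<Prod>h\<in>{h \<in> halfedges es - \<Union>M. (hv es h, \<sigma> (fst h)) = k}. X (hv es h) (\<sigma> (fst h)))"
      by simp
  qed
  also have "\<dots> = (\<Prod>h\<in>halfedges es - \<Union>M. X (hv es h) (\<sigma> (fst h)))"
    by (rule prod.group) auto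
  finally show ?thesis .
qed

lemma prod_hermite_cnt:
  fixes X :: "'v::finite \<Rightarrow> 'n::finite \<Rightarrow> 'a::comm_ring_1"
  shows "(\<Prod>u\<in>UNIV. \<Prod>i\<in>UNIV. hermite (cnt es \<sigma> u i) (X u i)) =
     (\<Sum>M\<in>{M\<in>matching_colls es. label_compatible \<sigma> M}.
        (-1) ^ card M * (\<Prod>h\<in>halfedges es - \<Union>M. X (hv es h) (\<sigma> (fst h))))"
proof -
  let ?S = "label_class es \<sigma>"
  let ?X = "\<lambda>k. X (fst k) (snd k)"
  let ?g = "\<lambda>N. \<Prod>k\<in>UNIV. (-1) ^ card (N k) * ?X k ^ card (?S k - \<Union>(N k))"
  have "(\<Prod>u\<in>UNIV. \<Prod>i\<in>UNIV. hermite (cnt es \<sigma> u i) (X u i)) = (\<Prod>k\<in>UNIV. matching_sum (?S k) (?X k))"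
    by (simp add: prod.cartesian_product cnt_eq_card_label_class matching_sum_eq_hermite case_prod_beta)
  also have "\<dots> = (\<Sum>N\<in>Pi\<^sub>E UNIV (\<lambda>k. partial_matchings (?S k)). ?g N)"
    unfolding matching_sum_def by (rule prod_sum_PiE) (auto simp: finite_partial_matchings)
  also have "\<dots> = (\<Sum>M\<in>{M\<in>matching_colls es. label_compatible \<sigma> M}.
        (-1) ^ card M * (\<Prod>h\<in>halfedges es - \<Union>M. X (hv es h) (\<sigma> (fst h))))"
  proof (rule sym, rule sum.reindex_bij_witness[where i = "\<lambda>N. \<Union>k. N k" and j = "\<lambda>M k. {p\<in>M. p \<subseteq> ?S k}"])
    fix N assume N_in: "N \<in> Pi\<^sub>E UNIV (\<lambda>k. partial_matchings (?S k))"
    have N: "N k \<in> partial_matchings (?S k)" for k using PiE_mem[OF N_in] by simp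
    show "(\<lambda>k. {p\<in>\<Union>k. N k. p \<subseteq> ?S k}) = N"
      using restrict_Union_partial_matchings_label_classes[OF N] by blast
    show "(\<Union>k. N k) \<in> {M\<in>matching_colls es. label_compatible \<sigma> M}"
      using Union_partial_matchings_label_classes[OF N] by blast
  next
    fix M assume "M \<in> {M\<in>matching_colls es. label_compatible \<sigma> M}"
    then have M: "M \<in> matching_colls es" "label_compatible \<sigma> M" by auto
    show "(\<Union>k. {p\<in>M. p \<subseteq> ?S k}) = M" by (rule Union_restrict_label_classes[OF M])
    show "(\<lambda>k. {p\<in>M. p \<subseteq> ?S k}) \<in> Pi\<^sub>E UNIV (\<lambda>k. partial_matchings (?S k))"
      unfolding PiE_UNIV_domain by (rule Pi_I) (rule matching_coll_restrict_label_class[OF M(1)])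
    show "?g (\<lambda>k. {p\<in>M. p \<subseteq> ?S k}) = (-1) ^ card M * (\<Prod>h\<in>halfedges es - \<Union>M. X (hv es h) (\<sigma> (fst h)))"
      by (simp add: prod.distrib label_class_unmatched[OF M] card_matching_coll_by_label_classes[OF M]
          power_sum prod_label_classes_unmatched)
  qed
  finally show ?thesis .
qed

theorem pG_eq_hermite_sum:
  "pG es = (\<Sum>\<sigma>\<in>Pi\<^sub>E {..<length es} (\<lambda>_. (UNIV :: 'n::finite set)).
              \<Prod>u\<in>UNIV. \<Prod>i\<in>UNIV. hermite (cnt es \<sigma> u i) (Var u i :: ('v::finite,'n) mpoly))"
proof -
  let ?P = "Pi\<^sub>E {..<length es} (\<lambda>_. (UNIV :: 'n set))"
  let ?f = "\<lambda>\<sigma> M. (-1) ^ card M * (\<Prod>h\<in>halfedges es - \<Union>M. Var (hv es h) (\<sigma> (fst h)) :: ('v,'n) mpoly)"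
  have "pG es = (\<Sum>M\<in>matching_colls es. \<Sum>\<sigma>\<in>{\<sigma>\<in>?P. label_compatible \<sigma> M}. ?f \<sigma> M)"
    unfolding pG_def
  proof (rule sum.cong[OF refl])
    fix M assume M: "M \<in> matching_colls es"
    show "(-1) ^ card M * of_nat CARD('n) ^ card (cycle_comps es M) * m_route es M =
        (\<Sum>\<sigma>\<in>{\<sigma>\<in>?P. label_compatible \<sigma> M}. ?f \<sigma> M)"
      by (simp add: sum_distrib_left[symmetric] sum_compatible_labellings[OF M] m_route_def mult.assoc)
  qed
  also have "\<dots> = (\<Sum>\<sigma>\<in>?P. \<Sum>M\<in>{M\<in>matching_colls es. label_compatible \<sigma> M}. ?f \<sigma> M)"
    by (rule sum.swap_restrict[symmetric]) (simp_all add: finite_PiE)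
  also have "\<dots> = (\<Sum>\<sigma>\<in>?P. \<Prod>u\<in>UNIV. \<Prod>i\<in>UNIV. hermite (cnt es \<sigma> u i) (Var u i :: ('v,'n) mpoly))"
    by (simp only: prod_hermite_cnt)
  finally show ?thesis .
qed

section \<open>Degree of \<open>p\<^sub>G\<close>\<close>

lemma gamma_class_empty:
  assumes "h \<in> halfedges es"
  shows "gamma_class es {} h = {(fst h, False), (fst h, True)}"
proof (intro equalityI subsetI)
  fix y assume "y \<in> gamma_class es {} h"
  then have "(h, y) \<in> (gamma_adj es {})\<^sup>*" by (simp only: mem_gamma_class)
  then have "fst y = fst h" by (induction rule: rtrancl_induct) (auto simp: gamma_adj_def)
  then show "y \<in> {(fst h, False), (fst h, True)}" by (cases y) auto
next
  fix y assume y: "y \<in> {(fst h, False), (fst h, True)}"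
  have "(fst h, \<not> snd h) \<in> gamma_class es {} h"
    using gamma_adj_edge[OF assms, of "{}"] by (auto simp: mem_gamma_class)
  moreover have "y = h \<or> y = (fst h, \<not> snd h)" using y by (cases h) auto
  ultimately show "y \<in> gamma_class es {} h" using gamma_class_self by blast
qed

lemma gamma_comps_empty: "gamma_comps es {} = (\<lambda>j. {(j, False), (j, True)}) ` {..<length es}"
proof -
  have "gamma_comps es {} = (\<lambda>h. {(fst h, False), (fst h, True)}) ` halfedges es"
    by (simp add: gamma_comps_eq gamma_class_empty)
  also have "\<dots> = (\<lambda>j. {(j, False), (j, True)}) ` {..<length es}"
    by (force simp: halfedges_def)
  finally show ?thesis .
qed

lemma cycle_comps_empty: "cycle_comps es {} = {}"
  by (auto simp: cycle_comps_def matched_def dest: gamma_comps_nonempty)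

lemma m_route_empty: "m_route es {} = (mono_m es :: ('v,'n::finite) mpoly)"
proof -
  have paths: "path_comps es {} = gamma_comps es {}"
    by (auto simp: path_comps_def matched_def dest: gamma_comps_nonempty)
  have inj: "inj_on (\<lambda>j. {(j, False), (j, True)}) {..<length es}"
    by (rule inj_onI) auto
  have "m_route es {} = (\<Prod>C\<in>gamma_comps es {}. \<Sum>i\<in>UNIV. \<Prod>h\<in>C. Var (hv es h) i :: ('v,'n) mpoly)"
    by (simp add: m_route_def paths path_ends_def matched_def)
  also have "\<dots> = (\<Prod>j<length es. \<Sum>i\<in>UNIV. \<Prod>h\<in>{(j, False), (j, True)}. Var (hv es h) i :: ('v,'n) mpoly)"
    unfolding gamma_comps_empty by (rule prod.reindex_cong[OF inj refl]) simp
  also have "\<dots> = mono_m es"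
    by (simp add: mono_m_def ip_def hv_def)
  finally show ?thesis .
qed

lemma pG_eq_mono_m_plus:
  "pG es = (mono_m es :: ('v,'n::finite) mpoly) +
     (\<Sum>M\<in>matching_colls es - {{}}. (-1) ^ card M * of_nat CARD('n) ^ card (cycle_comps es M) * m_route es M)"
proof -
  have "matching_colls es = insert {} (matching_colls es - {{}})"
    using empty_in_matching_colls by blast
  then show ?thesis
    unfolding pG_def by (subst (1) \<open>matching_colls es = _\<close>, subst sum.insert)
      (simp_all add: cycle_comps_empty m_route_empty)
qed

lemma sum_card_path_ends_le:
  "(\<Sum>C\<in>path_comps es M. card (path_ends M C)) \<le> card (halfedges es - \<Union>M)"
proof -
  let ?U = "halfedges es - \<Union>M"
  have "(\<Sum>C\<in>path_comps es M. card (path_ends M C)) = (\<Sum>C\<in>path_comps es M. card (C \<inter> ?U))"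
    by (simp add: path_comps_unmatched)
  also have "\<dots> = card (\<Union>C\<in>path_comps es M. C \<inter> ?U)"
  proof (rule card_UN_disjoint[symmetric])
    show "finite (path_comps es M)" by (simp add: path_comps_def)
    show "\<forall>C\<in>path_comps es M. finite (C \<inter> ?U)" by simp
    show "\<forall>C\<in>path_comps es M. \<forall>C'\<in>path_comps es M. C \<noteq> C' \<longrightarrow> C \<inter> ?U \<inter> (C' \<inter> ?U) = {}"
      unfolding path_comps_def by (auto dest: gamma_comps_eq_class)
  qed
  also have "\<dots> \<le> card ?U" by (rule card_mono) auto
  finally show ?thesis .
qed

lemma deg_le_m_route: "deg_le (m_route es M :: ('v,'n::finite) mpoly) (card (halfedges es - \<Union>M))"
proof (rule deg_le_mono[OF _ sum_card_path_ends_le])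
  show "deg_le (m_route es M :: ('v,'n) mpoly) (\<Sum>C\<in>path_comps es M. card (path_ends M C))"
    unfolding m_route_def
  proof (rule deg_le_prod)
    fix C assume C: "C \<in> path_comps es M"
    have "finite (path_ends M C)"
      using C gamma_comps_subset unfolding path_comps_def path_ends_def
      by (metis (no_types, lifting) finite_halfedges finite_subset mem_Collect_eq subsetI)
    then have "deg_le (\<Prod>h\<in>path_ends M C. Var (hv es h) i :: ('v,'n) mpoly) (\<Sum>h\<in>path_ends M C. 1)" for i
      by (rule deg_le_prod) (rule deg_le_Var)
    then show "deg_le (\<Sum>i\<in>UNIV. \<Prod>h\<in>path_ends M C. Var (hv es h) i :: ('v,'n) mpoly) (card (path_ends M C))"
      by (intro deg_le_sum) simp
  qed (simp add: path_comps_def)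
qed

lemma mdeg_keys_pG_minus_mono_m:
  "m \<in> Poly_Mapping.keys (pG es - mono_m es :: ('v,'n::finite) mpoly) \<Longrightarrow> mdeg m < 2 * length es"
proof -
  let ?c = "\<lambda>M. (-1) ^ card M * of_nat CARD('n) ^ card (cycle_comps es M) :: ('v,'n) mpoly"
  assume m: "m \<in> Poly_Mapping.keys (pG es - mono_m es :: ('v,'n) mpoly)"
  have deg_term: "deg_le (?c M * m_route es M) (2 * length es - 1)" if "M \<in> matching_colls es - {{}}" for M
  proof -
    have M: "M \<in> matching_colls es" "M \<noteq> {}" using that by auto
    then have "card M \<ge> 1"
      using finite_matching_coll[OF M(1)] by (simp add: Suc_le_eq card_gt_0_iff)
    then have "card (halfedges es - \<Union>M) \<le> 2 * length es - 1"
      using card_unmatched[OF M(1)] by simp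
    moreover have "deg_le (?c M) 0"
      using deg_le_mult[OF deg_le_power[OF deg_le_uminus[OF deg_le_of_nat[of 1]]]
          deg_le_power[OF deg_le_of_nat]] by simp
    ultimately show ?thesis
      using deg_le_mult[OF _ deg_le_m_route, of "?c M" 0 es M] deg_le_mono by fastforce
  qed
  have "pG es - mono_m es = (\<Sum>M\<in>matching_colls es - {{}}. ?c M * m_route es M)"
    by (simp add: pG_eq_mono_m_plus)
  then have "deg_le (pG es - mono_m es :: ('v,'n) mpoly) (2 * length es - 1)"
    using deg_le_sum[of "matching_colls es - {{}}", OF deg_term] by simp
  then have "mdeg m \<le> 2 * length es - 1" using m unfolding deg_le_def by blast
  moreover have "length es \<noteq> 0"
  proof
    assume "length es = 0"
    then have "matching_colls es = {{}}"
      using card_unmatched(2) finite_matching_coll empty_in_matching_colls by fastforce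
    then show False using m by (simp add: pG_eq_mono_m_plus)
  qed
  ultimately show "mdeg m < 2 * length es" by linarith
qed

lemma homogeneous_mono_m: "homogeneous (mono_m es :: ('v,'n::finite) mpoly) (2 * length es)"
proof -
  have "homogeneous (ip u w :: ('v,'n) mpoly) 2" for u w
    unfolding ip_def by (intro homogeneous_sum) (metis homogeneous_mult homogeneous_Var one_add_one)
  then have "homogeneous (mono_m es :: ('v,'n) mpoly) (\<Sum>j<length es. 2)"
    unfolding mono_m_def by (intro homogeneous_prod) simp_all
  then show ?thesis by (simp add: mult.commute)
qed

lemma mono_m_nonzero: "(mono_m es :: ('v,'n::finite) mpoly) \<noteq> 0"
proof
  assume "(mono_m es :: ('v,'n) mpoly) = 0"
  moreover have "eval_mp (mono_m es :: ('v,'n) mpoly) (\<lambda>_. \<chi> i. 1) = of_nat CARD('n) ^ length es"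
    by (simp add: mono_m_def eval_mp_prod ip_def eval_mp_sum eval_mp_mult)
  ultimately show False by simp
qed

lemma tdeg_pG: "tdeg (pG es :: ('v,'n::finite) mpoly) = 2 * length es"
proof -
  let ?m = "mono_m es :: ('v,'n) mpoly"
  let ?p = "pG es :: ('v,'n) mpoly"
  obtain m0 where m0: "m0 \<in> Poly_Mapping.keys ?m"
    using mono_m_nonzero[of es] by (metis keys_eq_empty ex_in_conv)
  have deg_m0: "mdeg m0 = 2 * length es"
    using homogeneous_mono_m[of es] m0 unfolding homogeneous_def by blast
  then have "Poly_Mapping.lookup (?p - ?m) m0 = 0"
    using mdeg_keys_pG_minus_mono_m[of m0 es] by (auto simp: in_keys_iff)
  then have m0_p: "m0 \<in> Poly_Mapping.keys ?p" using m0 by (simp add: in_keys_iff lookup_minus)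
  have le: "mdeg m \<le> 2 * length es" if "m \<in> Poly_Mapping.keys ?p" for m
  proof -
    have "m \<in> Poly_Mapping.keys ?m \<union> Poly_Mapping.keys (?p - ?m)"
      using keys_add[of ?m "?p - ?m"] that by auto
    then show ?thesis
      using homogeneous_mono_m[of es] mdeg_keys_pG_minus_mono_m[of m es]
      by (auto simp: homogeneous_def)
  qed
  show ?thesis unfolding tdeg_def
  proof (rule Max_eqI)
    show "y \<le> 2 * length es" if "y \<in> insert 0 (mdeg ` Poly_Mapping.keys ?p)" for y
      using that le by auto
    have "mdeg m0 \<in> mdeg ` Poly_Mapping.keys ?p" using m0_p by (rule imageI)
    then show "2 * length es \<in> insert 0 (mdeg ` Poly_Mapping.keys ?p)" using deg_m0 by simp
  qed simp
qed

section \<open>Every path of \<open>\<Gamma>\<^sub>M\<close> has two ends\<close>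

definition twin :: "nat \<times> bool \<Rightarrow> nat \<times> bool" where
  "twin h = (fst h, \<not> snd h)"

definition partner :: "(nat \<times> bool) set set \<Rightarrow> nat \<times> bool \<Rightarrow> nat \<times> bool" where
  "partner M h = (if matched M h then (THE h'. h' \<noteq> h \<and> {h, h'} \<in> M) else h)"

lemma twin_twin [simp]: "twin (twin h) = h"
  by (simp add: twin_def)

lemma twin_neq: "twin h \<noteq> h"
  by (cases h) (simp add: twin_def)

lemma twin_halfedges: "h \<in> halfedges es \<Longrightarrow> twin h \<in> halfedges es"
  by (auto simp: twin_def halfedges_def mem_Times_iff)

context
  fixes es :: "'v mgraph" and M
  assumes M: "M \<in> matching_colls es"
begin

lemma matching_partner_unique:
  assumes "{h, a} \<in> M" "{h, b} \<in> M" "a \<noteq> h" "b \<noteq> h"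
  shows "a = b"
proof (rule ccontr)
  assume "a \<noteq> b"
  then have "{h, a} \<noteq> {h, b}" using assms by (metis doubleton_eq_iff)
  then have "{h, a} \<inter> {h, b} = {}" using matching_colls_disjoint[OF M assms(1,2)] by blast
  then show False by blast
qed

lemma partner_matched:
  assumes "matched M h"
  shows "partner M h \<noteq> h" "{h, partner M h} \<in> M"
proof -
  obtain p where p: "p \<in> M" "h \<in> p" using assms by (auto simp: matched_def)
  obtain a b where ab: "p = {a,b}" "a \<noteq> b" using matching_collsD[OF M p(1)] by blast
  obtain h' where h': "p = {h, h'}" "h' \<noteq> h"
    using ab p(2) by (metis insert_commute insert_iff singletonD)
  have ex: "h' \<noteq> h \<and> {h, h'} \<in> M" using h' p(1) by simp
  have "(THE x. x \<noteq> h \<and> {h, x} \<in> M) = h'"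
    by (rule the_equality) (use ex matching_partner_unique in blast)+
  then have "partner M h = h'" using assms by (simp add: partner_def)
  then show "partner M h \<noteq> h" "{h, partner M h} \<in> M" using ex by simp_all
qed

lemma partner_unmatched: "\<not> matched M h \<Longrightarrow> partner M h = h"
  by (simp add: partner_def)

lemma partner_eq_self_iff: "partner M h = h \<longleftrightarrow> \<not> matched M h"
  using partner_matched(1) partner_unmatched by blast

lemma partner_halfedges: "h \<in> halfedges es \<Longrightarrow> partner M h \<in> halfedges es"
proof (cases "matched M h")
  case True
  then have "{h, partner M h} \<in> M" by (rule partner_matched)
  then show ?thesis using matching_colls_pair_subset[OF M] by blast
qed (simp add: partner_unmatched)

lemma partner_partner: "partner M (partner M h) = h"
proof (cases "matched M h")
  case True
  have p: "{h, partner M h} \<in> M" "partner M h \<noteq> h" using partner_matched[OF True] by auto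
  then have mm: "matched M (partner M h)" by (auto simp: matched_def)
  have "{partner M h, partner M (partner M h)} \<in> M" "partner M (partner M h) \<noteq> partner M h"
    using partner_matched[OF mm] by auto
  moreover have "{partner M h, h} \<in> M" using p(1) by (simp add: insert_commute)
  ultimately show ?thesis using matching_partner_unique p(2) by metis
qed (simp add: partner_unmatched)

lemma gamma_adj_iff:
  "(h, h') \<in> gamma_adj es M \<longleftrightarrow> h \<in> halfedges es \<and> (h' = twin h \<or> (matched M h \<and> h' = partner M h))"
proof
  assume a: "(h, h') \<in> gamma_adj es M"
  then have hh: "h \<in> halfedges es" "h' \<in> halfedges es" "h \<noteq> h'" "fst h = fst h' \<or> {h, h'} \<in> M"
    by (auto simp: gamma_adj_def)
  show "h \<in> halfedges es \<and> (h' = twin h \<or> (matched M h \<and> h' = partner M h))"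
  proof (cases "fst h = fst h'")
    case True
    then have "h' = twin h" using hh(3) by (cases h; cases h') (auto simp: twin_def)
    then show ?thesis using hh by simp
  next
    case False
    then have p: "{h, h'} \<in> M" using hh by simp
    then have m: "matched M h" by (auto simp: matched_def)
    then have "h' = partner M h"
      using matching_partner_unique[OF p partner_matched(2)[OF m]] hh(3) partner_matched(1)[OF m]
        by metis
    then show ?thesis using hh m by simp
  qed
next
  assume a: "h \<in> halfedges es \<and> (h' = twin h \<or> (matched M h \<and> h' = partner M h))"
  then show "(h, h') \<in> gamma_adj es M"
  proof (elim conjE disjE)
    assume h: "h \<in> halfedges es" "h' = twin h"
    have eH: "twin h \<in> halfedges es" by (rule twin_halfedges[OF h(1)])
    have "twin h \<noteq> h" by (rule twin_neq)
    moreover have "fst h = fst (twin h)" by (simp add: twin_def)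
    ultimately show ?thesis using h eH by (auto simp: gamma_adj_def)
  next
    assume h: "h \<in> halfedges es" "matched M h" "h' = partner M h"
    then show ?thesis
      using partner_matched[OF h(2)] partner_halfedges[OF h(1)] by (auto simp: gamma_adj_def)
  qed
qed

definition next_halfedge where "next_halfedge = partner M \<circ> twin"
definition prev_halfedge where "prev_halfedge = twin \<circ> partner M"

lemma next_halfedge_halfedges: "h \<in> halfedges es \<Longrightarrow> next_halfedge h \<in> halfedges es"
  by (simp add: next_halfedge_def twin_halfedges partner_halfedges)

lemma prev_halfedge_next_halfedge [simp]: "prev_halfedge (next_halfedge h) = h"
  by (simp add: next_halfedge_def prev_halfedge_def partner_partner)

lemma next_halfedge_prev_halfedge [simp]: "next_halfedge (prev_halfedge h) = h"
  by (simp add: next_halfedge_def prev_halfedge_def partner_partner)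

lemma next_pow_halfedges: "h \<in> halfedges es \<Longrightarrow> (next_halfedge ^^ k) h \<in> halfedges es"
  by (induction k) (simp_all add: next_halfedge_halfedges)

lemma prev_pow_next_pow: "(prev_halfedge ^^ k) ((next_halfedge ^^ k) h) = h"
proof (induction k arbitrary: h)
  case (Suc k)
  have "(prev_halfedge ^^ Suc k) ((next_halfedge ^^ Suc k) h)
      = (prev_halfedge ^^ k) (prev_halfedge ((next_halfedge ^^ Suc k) h))"
    by (simp add: funpow_Suc_right del: funpow.simps)
  also have "(next_halfedge ^^ Suc k) h = next_halfedge ((next_halfedge ^^ k) h)" by simp
  finally show ?case using Suc by simp
qed simp

lemma next_pow_prev_pow: "(next_halfedge ^^ k) ((prev_halfedge ^^ k) h) = h"
proof (induction k arbitrary: h)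
  case (Suc k)
  have "(next_halfedge ^^ Suc k) ((prev_halfedge ^^ Suc k) h)
      = (next_halfedge ^^ k) (next_halfedge ((prev_halfedge ^^ Suc k) h))"
    by (simp add: funpow_Suc_right del: funpow.simps)
  also have "(prev_halfedge ^^ Suc k) h = prev_halfedge ((prev_halfedge ^^ k) h)" by simp
  finally show ?case using Suc by simp
qed simp

lemma twin_next_pow: "twin ((next_halfedge ^^ k) x) = (prev_halfedge ^^ k) (twin x)"
proof (induction k arbitrary: x)
  case (Suc k)
  have "twin ((next_halfedge ^^ Suc k) x) = twin ((next_halfedge ^^ k) (next_halfedge x))"
    by (simp add: funpow_Suc_right del: funpow.simps)
  also have "\<dots> = (prev_halfedge ^^ k) (twin (next_halfedge x))" by (rule Suc)
  also have "twin (next_halfedge x) = prev_halfedge (twin x)"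
    by (simp add: next_halfedge_def prev_halfedge_def)
  finally show ?case by (simp add: funpow_Suc_right del: funpow.simps)
qed simp

lemma next_pow_inj: "(next_halfedge ^^ k) a = (next_halfedge ^^ k) b \<Longrightarrow> a = b"
  by (metis prev_pow_next_pow)

lemma gamma_rtrancl_next_pow:
  assumes "h \<in> halfedges es"
  shows "(h, (next_halfedge ^^ k) h) \<in> (gamma_adj es M)\<^sup>*"
proof (induction k)
  case (Suc k)
  let ?x = "(next_halfedge ^^ k) h"
  have x: "?x \<in> halfedges es" by (rule next_pow_halfedges[OF assms])
  have "(?x, twin ?x) \<in> gamma_adj es M" using x by (simp add: gamma_adj_iff)
  moreover have "(twin ?x, partner M (twin ?x)) \<in> (gamma_adj es M)\<^sup>*"
    using twin_halfedges[OF x]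
      by (cases "matched M (twin ?x)") (simp_all add: gamma_adj_iff partner_unmatched r_into_rtrancl)
  moreover have "(next_halfedge ^^ Suc k) h = partner M (twin ?x)" by (simp add: next_halfedge_def)
  ultimately show ?case using Suc by (metis rtrancl_into_rtrancl rtrancl_trans)
qed simp

text \<open>Starting from an unmatched half-edge \<open>h0\<close> and crossing alternately an edge (\<open>twin\<close>) and a
  matched pair (\<open>partner\<close>) runs through the whole component of \<open>h0\<close>. Running backwards is
  conjugation by \<open>twin\<close>; this forces the period to be even and leaves \<open>h0\<close> and the half-way
  point as the only unmatched half-edges of the component.\<close>

context
  fixes h0 assumes h0H: "h0 \<in> halfedges es" and h0u: "\<not> matched M h0"
begin

lemma partner_h0: "partner M h0 = h0" using h0u by (simp add: partner_unmatched)

lemma twin_next_pow_h0: "twin ((next_halfedge ^^ k) h0) = (prev_halfedge ^^ Suc k) h0"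
proof -
  have "twin h0 = prev_halfedge h0" using partner_h0 by (simp add: prev_halfedge_def)
  then show ?thesis by (simp add: twin_next_pow funpow_Suc_right del: funpow.simps)
qed

lemma partner_next_pow_h0: "partner M ((next_halfedge ^^ k) h0) = (prev_halfedge ^^ k) h0"
proof (cases k)
  case 0
  then show ?thesis by (simp add: partner_h0)
next
  case (Suc j)
  have "partner M ((next_halfedge ^^ Suc j) h0)
      = partner M (partner M (twin ((next_halfedge ^^ j) h0)))" by (simp add: next_halfedge_def)
  also have "\<dots> = twin ((next_halfedge ^^ j) h0)" by (simp add: partner_partner)
  finally show ?thesis using Suc twin_next_pow_h0 by simp
qed

lemma next_halfedge_periodic: "\<exists>p>0. (next_halfedge ^^ p) h0 = h0"
proof -
  let ?f = "\<lambda>k. (next_halfedge ^^ k) h0"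
  have "?f ` {0..card (halfedges es)} \<subseteq> halfedges es" using next_pow_halfedges[OF h0H] by auto
  then have "card (?f ` {0..card (halfedges es)}) \<le> card (halfedges es)" by (simp add: card_mono)
  then have "\<not> inj_on ?f {0..card (halfedges es)}" using card_image by fastforce
  then obtain i j where ij: "i \<noteq> j" "?f i = ?f j" unfolding inj_on_def by blast
  have *: "(next_halfedge ^^ (b - a)) h0 = h0" if "a < b" "?f a = ?f b" for a b
  proof -
    have "(next_halfedge ^^ a) ((next_halfedge ^^ (b - a)) h0) = (next_halfedge ^^ a) h0"
      using that by (simp add: funpow_add[symmetric, THEN fun_cong, simplified comp_def] )
    then show ?thesis by (rule next_pow_inj)
  qed
  show ?thesis
  proof (cases "i < j")
    case True then show ?thesis using *[of i j] ij by (intro exI[of _ "j - i"]) auto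
  next
    case False then have "j < i" using ij by simp
    then show ?thesis using *[of j i] ij by (intro exI[of _ "i - j"]) auto
  qed
qed

definition period where "period = (LEAST p. p > 0 \<and> (next_halfedge ^^ p) h0 = h0)"

lemma period_spec: "period > 0" "(next_halfedge ^^ period) h0 = h0"
  using LeastI_ex[OF next_halfedge_periodic] by (simp_all add: period_def)

lemma period_minimal: "0 < q \<Longrightarrow> q < period \<Longrightarrow> (next_halfedge ^^ q) h0 \<noteq> h0"
  using not_less_Least[of q "\<lambda>p. p > 0 \<and> (next_halfedge ^^ p) h0 = h0"] by (auto simp: period_def)

lemma next_pow_mod_period: "(next_halfedge ^^ k) h0 = (next_halfedge ^^ (k mod period)) h0"
  using funpow_mod_eq[where f = next_halfedge and n = period and x = h0 and m = k] period_spec(2)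
    by simp

lemma period_dvd: "(next_halfedge ^^ k) h0 = h0 \<Longrightarrow> period dvd k"
proof -
  assume "(next_halfedge ^^ k) h0 = h0"
  then have "(next_halfedge ^^ (k mod period)) h0 = h0" using next_pow_mod_period by simp
  moreover have "k mod period < period" using period_spec(1) by simp
  ultimately have "k mod period = 0" using period_minimal by (metis gr0I)
  then show ?thesis by (simp add: dvd_eq_mod_eq_0)
qed

lemma next_pow_mult_period: "(next_halfedge ^^ (m * period)) h0 = h0"
  by (induction m) (simp_all add: funpow_add period_spec(2))

lemma prev_pow_eq_next_pow: "(prev_halfedge ^^ k) h0 = (next_halfedge ^^ (k * (period - 1))) h0"
proof -
  have "(next_halfedge ^^ k) ((next_halfedge ^^ (k * (period - 1))) h0)
      = (next_halfedge ^^ (k * period)) h0"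
  proof -
    have "k + k * (period - 1) = k * period"
      using period_spec(1) by (cases period) (simp_all add: algebra_simps)
    then show ?thesis by (metis comp_apply funpow_add)
  qed
  also have "\<dots> = h0" using next_pow_mult_period by (simp add: mult.commute)
  finally have "(next_halfedge ^^ k) ((next_halfedge ^^ (k * (period - 1))) h0)
      = (next_halfedge ^^ k) ((prev_halfedge ^^ k) h0)" by (simp add: next_pow_prev_pow)
  then show ?thesis by (metis next_pow_inj)
qed

definition halfedge_orbit where "halfedge_orbit = {(next_halfedge ^^ k) h0 | k. True}"

lemma twin_in_halfedge_orbit: "x \<in> halfedge_orbit \<Longrightarrow> twin x \<in> halfedge_orbit"
proof -
  assume "x \<in> halfedge_orbit"
  then obtain k where x: "x = (next_halfedge ^^ k) h0" unfolding halfedge_orbit_def by blast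
  have "twin x = (next_halfedge ^^ (Suc k * (period - 1))) h0"
    unfolding x by (simp only: twin_next_pow_h0 prev_pow_eq_next_pow)
  then show ?thesis unfolding halfedge_orbit_def by blast
qed

lemma partner_in_halfedge_orbit: "x \<in> halfedge_orbit \<Longrightarrow> partner M x \<in> halfedge_orbit"
proof -
  assume "x \<in> halfedge_orbit"
  then obtain k where x: "x = (next_halfedge ^^ k) h0" unfolding halfedge_orbit_def by blast
  have "partner M x = (next_halfedge ^^ (k * (period - 1))) h0"
    unfolding x by (simp only: partner_next_pow_h0 prev_pow_eq_next_pow)
  then show ?thesis unfolding halfedge_orbit_def by blast
qed

lemma gamma_class_eq_halfedge_orbit: "gamma_class es M h0 = halfedge_orbit"
proof (intro equalityI subsetI)
  fix y assume "y \<in> gamma_class es M h0"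
  then have "(h0, y) \<in> (gamma_adj es M)\<^sup>*" by (simp add: mem_gamma_class)
  then show "y \<in> halfedge_orbit"
  proof (induction rule: rtrancl_induct)
    case base
    then show ?case unfolding halfedge_orbit_def by (auto intro: exI[of _ 0])
  next
    case (step y z)
    then have "z = twin y \<or> z = partner M y" using gamma_adj_iff[of y z] by blast
    then show ?case
      using twin_in_halfedge_orbit[OF step.IH] partner_in_halfedge_orbit[OF step.IH] by blast
  qed
next
  fix y assume "y \<in> halfedge_orbit"
  then show "y \<in> gamma_class es M h0"
    unfolding halfedge_orbit_def
      using gamma_rtrancl_next_pow[OF h0H] by (auto simp: mem_gamma_class)
qed

lemma even_period: "even period"
proof (rule ccontr)
  assume "\<not> even period"
  then obtain k where k: "period = 2 * k + 1" by (metis oddE)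
  have "twin ((next_halfedge ^^ k) h0) \<noteq> (next_halfedge ^^ k) h0" by (rule twin_neq)
  then have "(prev_halfedge ^^ Suc k) h0 \<noteq> (next_halfedge ^^ k) h0" by (metis twin_next_pow_h0)
  then have "(next_halfedge ^^ Suc k) ((prev_halfedge ^^ Suc k) h0)
      \<noteq> (next_halfedge ^^ Suc k) ((next_halfedge ^^ k) h0)" by (metis prev_pow_next_pow)
  moreover have A: "(next_halfedge ^^ Suc k) ((prev_halfedge ^^ Suc k) h0) = h0"
    by (rule next_pow_prev_pow)
  moreover have B: "(next_halfedge ^^ Suc k) ((next_halfedge ^^ k) h0)
      = (next_halfedge ^^ (Suc k + k)) h0" by (simp only: funpow_add comp_apply)
  ultimately have C: "h0 \<noteq> (next_halfedge ^^ (Suc k + k)) h0" by metis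
  have "Suc k + k = period" using k by simp
  then show False using C period_spec(2) by metis
qed

lemma unmatched_in_halfedge_orbit:
  assumes "x \<in> halfedge_orbit" "\<not> matched M x"
  shows "x = h0 \<or> x = (next_halfedge ^^ (period div 2)) h0"
proof -
  obtain k where x: "x = (next_halfedge ^^ k) h0"
    using assms(1) unfolding halfedge_orbit_def by blast
  have "partner M x = x" using assms(2) by (simp add: partner_unmatched)
  then have "(prev_halfedge ^^ k) h0 = (next_halfedge ^^ k) h0" using x partner_next_pow_h0 by simp
  then have "(next_halfedge ^^ k) ((prev_halfedge ^^ k) h0)
      = (next_halfedge ^^ k) ((next_halfedge ^^ k) h0)" by simp
  then have "h0 = (next_halfedge ^^ (k + k)) h0" by (simp add: next_pow_prev_pow funpow_add)
  then have "period dvd 2 * k" using period_dvd by (metis mult_2)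
  moreover obtain q where q: "period = 2 * q" using even_period by (metis evenE)
  ultimately have "q dvd k" by simp
  then obtain t where t: "k = q * t" by (metis dvdE)
  have "k mod period = (q * t) mod (q * 2)" unfolding q t by (simp only: mult.commute)
  also have "\<dots> = q * (t mod 2)" by (rule mult_mod_right[symmetric])
  finally have km: "k mod period = q * (t mod 2)" .
  have "t mod 2 = 0 \<or> t mod 2 = 1" by auto
  then have "k mod period = 0 \<or> k mod period = q" using km by auto
  moreover have "x = (next_halfedge ^^ (k mod period)) h0" unfolding x by (rule next_pow_mod_period)
  moreover have "period div 2 = q" using q by simp
  ultimately show ?thesis by auto
qed

lemma next_pow_half_period_unmatched: "\<not> matched M ((next_halfedge ^^ (period div 2)) h0)"
proof -
  obtain q where q: "period = 2 * q" using even_period by (metis evenE)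
  have "(next_halfedge ^^ q) ((prev_halfedge ^^ q) h0) = h0" by (rule next_pow_prev_pow)
  moreover have "(next_halfedge ^^ q) ((next_halfedge ^^ q) h0) = h0"
    using period_spec(2) q by (simp add: funpow_add[symmetric, THEN fun_cong, simplified] mult_2)
  ultimately have "(prev_halfedge ^^ q) h0 = (next_halfedge ^^ q) h0" by (metis next_pow_inj)
  then have "partner M ((next_halfedge ^^ q) h0) = (next_halfedge ^^ q) h0"
    using partner_next_pow_h0 by simp
  then show ?thesis using q partner_eq_self_iff by simp
qed

lemma next_pow_half_period_neq: "(next_halfedge ^^ (period div 2)) h0 \<noteq> h0"
proof -
  obtain q where q: "period = 2 * q" using even_period by (metis evenE)
  then have "0 < q" "q < period" using period_spec(1) by auto
  then show ?thesis using period_minimal q by simp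
qed

lemma card_unmatched_gamma_class: "card {h \<in> gamma_class es M h0. \<not> matched M h} = 2"
proof -
  have "{h \<in> gamma_class es M h0. \<not> matched M h} = {h0, (next_halfedge ^^ (period div 2)) h0}"
  proof (intro equalityI subsetI)
    fix x assume "x \<in> {h \<in> gamma_class es M h0. \<not> matched M h}"
    then show "x \<in> {h0, (next_halfedge ^^ (period div 2)) h0}"
      using unmatched_in_halfedge_orbit gamma_class_eq_halfedge_orbit by auto
  next
    fix x assume "x \<in> {h0, (next_halfedge ^^ (period div 2)) h0}"
    moreover have "(next_halfedge ^^ (period div 2)) h0 \<in> halfedge_orbit"
      unfolding halfedge_orbit_def by blast
    ultimately show "x \<in> {h \<in> gamma_class es M h0. \<not> matched M h}"
      using h0u next_pow_half_period_unmatched gamma_class_eq_halfedge_orbit gamma_class_self[of h0 es M] by auto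
  qed
  then show ?thesis using next_pow_half_period_neq by simp
qed

end

lemma card_path_ends:
  assumes C: "C \<in> path_comps es M"
  shows "card (path_ends M C) = 2"
proof -
  obtain h0 where h0: "h0 \<in> C" "\<not> matched M h0" using C by (auto simp: path_comps_def)
  have Cc: "C \<in> gamma_comps es M" using C by (simp add: path_comps_def)
  have h0H: "h0 \<in> halfedges es" using gamma_comps_subset[OF Cc] h0(1) by blast
  have "C = gamma_class es M h0" using gamma_comps_eq_class[OF Cc h0(1)] .
  then show ?thesis unfolding path_ends_def using card_unmatched_gamma_class[OF h0H h0(2)] by simp
qed

end

section \<open>Orthogonal invariance and Gaussian orthogonality\<close>

lemma eval_m_route_orthogonal_invariant:
  fixes T :: "real^'n::finite^'n"
  assumes T: "orthogonal_matrix T" and M: "M \<in> matching_colls es"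
  shows "eval_mp (m_route es M :: ('v,'n) mpoly) (\<lambda>u. T *v d u)
      = eval_mp (m_route es M :: ('v,'n) mpoly) d"
proof -
  have "orthogonal_transformation (\<lambda>x. T *v x)"
    using T
      by (simp add: orthogonal_transformation_matrix matrix_vector_mul_linear matrix_of_matrix_vector_mul)
  then have T_inner: "(T *v x) \<bullet> (T *v y) = x \<bullet> y" for x y
    by (simp add: orthogonal_transformation_def)
  have "eval_mp (\<Sum>i\<in>UNIV. \<Prod>h\<in>path_ends M C. Var (hv es h) i :: ('v,'n) mpoly) (\<lambda>u. T *v d u) =
      eval_mp (\<Sum>i\<in>UNIV. \<Prod>h\<in>path_ends M C. Var (hv es h) i :: ('v,'n) mpoly) d"
    if C: "C \<in> path_comps es M" for C
  proof -
    obtain a b where ab: "path_ends M C = {a, b}" "a \<noteq> b"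
      using card_path_ends[OF M C] by (metis card_2_iff)
    have "eval_mp (\<Sum>i\<in>UNIV. \<Prod>h\<in>path_ends M C. Var (hv es h) i :: ('v,'n) mpoly) D =
        D (hv es a) \<bullet> D (hv es b)" for D :: "'v \<Rightarrow> real^'n"
      by (simp add: eval_mp_sum eval_mp_prod eval_mp_mult ab inner_vec_def)
    then show ?thesis by (simp add: T_inner)
  qed
  then show ?thesis
    unfolding m_route_def by (simp add: eval_mp_prod path_comps_def)
qed

lemma eval_pG_orthogonal_invariant:
  fixes T :: "real^'n::finite^'n"
  assumes "orthogonal_matrix T"
  shows "eval_mp (pG es :: ('v,'n) mpoly) (\<lambda>u. T *v d u) = eval_mp (pG es :: ('v,'n) mpoly) d"
  unfolding pG_def
  by (simp add: eval_mp_sum eval_mp_mult eval_mp_power eval_mp_uminus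
      eval_m_route_orthogonal_invariant[OF assms])

lemma sum_cnt: "(\<Sum>k\<in>(UNIV :: ('v::finite \<times> 'n::finite) set). cnt es \<sigma> (fst k) (snd k)) = 2 * length es"
proof -
  have "(\<Sum>k\<in>(UNIV :: ('v \<times> 'n) set). cnt es \<sigma> (fst k) (snd k)) =
      (\<Sum>k\<in>(UNIV :: ('v \<times> 'n) set). \<Sum>h\<in>{h\<in>halfedges es. (hv es h, \<sigma> (fst h)) = k}. (1::nat))"
    by (simp add: cnt_eq_card_label_class label_class_def)
  also have "\<dots> = card (halfedges es)"
    by (subst sum.group) auto
  finally show ?thesis by (simp add: card_halfedges)
qed

lemma eval_pG_to_pt:
  "eval_mp (pG es :: ('v::finite,'n::finite) mpoly) (to_pt x) =
    (\<Sum>\<sigma>\<in>Pi\<^sub>E {..<length es} (\<lambda>_. (UNIV :: 'n set)). \<Prod>k\<in>UNIV. hermite (cnt es \<sigma> (fst k) (snd k)) (x k))"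
  by (simp add: pG_eq_hermite_sum eval_mp_sum finite_PiE eval_mp_prod eval_mp_hermite to_pt_def
      prod.cartesian_product case_prod_beta)

lemma integral_pG_mult_pG:
  fixes G H :: "('v::finite) mgraph"
  assumes "length G \<noteq> length H"
  shows "(\<integral>x. eval_mp (pG G :: ('v,'n::finite) mpoly) (to_pt x) * eval_mp (pG H :: ('v,'n) mpoly) (to_pt x) \<partial>gauss) = 0"
proof -
  let ?PG = "Pi\<^sub>E {..<length G} (\<lambda>_. (UNIV :: 'n set))"
  let ?PH = "Pi\<^sub>E {..<length H} (\<lambda>_. (UNIV :: 'n set))"
  let ?A = "\<lambda>\<sigma> x. \<Prod>k\<in>(UNIV :: ('v \<times> 'n) set). hermite (cnt G \<sigma> (fst k) (snd k)) (x k) :: real"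
  let ?B = "\<lambda>\<tau> x. \<Prod>k\<in>(UNIV :: ('v \<times> 'n) set). hermite (cnt H \<tau> (fst k) (snd k)) (x k) :: real"
  have deg_neq: "(\<Sum>k\<in>(UNIV :: ('v \<times> 'n) set). cnt G \<sigma> (fst k) (snd k)) \<noteq>
      (\<Sum>k\<in>(UNIV :: ('v \<times> 'n) set). cnt H \<tau> (fst k) (snd k))" for \<sigma> \<tau> :: "nat \<Rightarrow> 'n"
    using assms by (simp only: sum_cnt)
  have "(\<integral>x. eval_mp (pG G :: ('v,'n) mpoly) (to_pt x) * eval_mp (pG H :: ('v,'n) mpoly) (to_pt x) \<partial>gauss) =
      (\<integral>x. (\<Sum>\<sigma>\<in>?PG. \<Sum>\<tau>\<in>?PH. ?A \<sigma> x * ?B \<tau> x) \<partial>gauss)"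
    by (simp add: eval_pG_to_pt sum_product)
  also have "\<dots> = (\<Sum>\<sigma>\<in>?PG. \<Sum>\<tau>\<in>?PH. \<integral>x. ?A \<sigma> x * ?B \<tau> x \<partial>gauss)"
    unfolding gauss_def using product_hermite_orthogonal(1)[OF deg_neq]
    by (simp add: Bochner_Integration.integral_sum Bochner_Integration.integrable_sum)
  also have "\<dots> = 0"
    unfolding gauss_def using product_hermite_orthogonal(2)[OF deg_neq] by simp
  finally show ?thesis .
qed

theorem mainTheorem3:
  fixes G H :: "('v::finite) mgraph"
    and T :: "real^'n::finite^'n"
  assumes "orthogonal_matrix T"
  shows "pG G = (\<Sum>\<sigma>\<in>Pi\<^sub>E {..<length G} (\<lambda>_. (UNIV :: 'n set)).
              \<Prod>u\<in>UNIV. \<Prod>i\<in>UNIV. hermite (cnt G \<sigma> u i) (Var u i :: ('v,'n) mpoly))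
    \<and> (\<forall>d. eval_mp (pG G :: ('v,'n) mpoly) (\<lambda>u. T *v d u) = eval_mp (pG G :: ('v,'n) mpoly) d)
    \<and> tdeg (pG G :: ('v,'n) mpoly) = 2 * length G
    \<and> (\<forall>m\<in>Poly_Mapping.keys (pG G - mono_m G :: ('v,'n) mpoly). mdeg m < 2 * length G)
    \<and> (length G \<noteq> length H \<longrightarrow>
        (\<integral>x. eval_mp (pG G :: ('v,'n) mpoly) (to_pt x) * eval_mp (pG H :: ('v,'n) mpoly) (to_pt x) \<partial>gauss) = 0)"
  using pG_eq_hermite_sum[of G] eval_pG_orthogonal_invariant[OF assms] tdeg_pG[of G]
    mdeg_keys_pG_minus_mono_m[of _ G] integral_pG_mult_pG[of G H]
  by blast

end
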